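(* Let $\psi:\mathbb{R}\to\mathbb{R}$ be any continuous $1$-periodic function, and let $\varepsilon>0$, $0<\alpha<1$ satisfy $(\pi^2\varepsilon^2+1)\alpha\ge 1$. Then every minimizer of $E$ over $\mathcal{A}$ is a graph curve.
   Context: Let $\Omega=\{(x,y)\in\mathbb{R}^2: y>\psi(x)\}$, $\overline{\Omega}=\{y\ge\psi(x)\}$, $\partial\Omega=\{y=\psi(x)\}$, $I=(0,1)$. The admissible set $\mathcal{A}$ consists of all $\gamma=(x,y)\in H^2(I;\mathbb{R}^2)$ (hence $C^1$ on $\bar I$) with $|\dot\gamma(t)|>0$ and $\gamma(t)\in\overline{\Omega}$ for all $t\in\bar I$, and $x(0)=0$, $x(1)=1$, $y(0)=y(1)$, $\dot\gamma(0)=\dot\gamma(1)$. For $\gamma\in\mathcal{A}$ let $L_\gamma=\int_I|\dot\gamma|\,dt$ and, with arc length $s$, $E[\gamma]=\int_0^{L_\gamma}[\varepsilon^2|\gamma_{ss}(s)|^2+\Theta(\gamma(s))]\,ds$, where $\Theta\equiv1$ on $\Omega$ and $\Theta\equiv\alpha$ on $\partial\Omega$. A minimizer is a $\gamma\in\mathcal{A}$ with $E[\gamma]=\inf_{\mathcal{A}}E$. A curve $\gamma=(x,y)\in\mathcal{A}$ is a graph curve if $x'(t)>0$ for all $t\in\bar I$. *)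

theory Defs
  imports "HOL-Analysis.Analysis"
begin

text \<open>A planar curve on I = (0,1) is given by its two components x, y :: real => real;
  only their values on [0,1] matter.\<close>

definition d1 :: "(real \<Rightarrow> real) \<Rightarrow> real \<Rightarrow> real" where
  "d1 f t = vector_derivative f (at t within {0..1})"

definition d2 :: "(real \<Rightarrow> real) \<Rightarrow> real \<Rightarrow> real" where
  "d2 f = d1 (d1 f)"

definition H2_01 :: "(real \<Rightarrow> real) \<Rightarrow> bool" where
  "H2_01 f \<longleftrightarrow> (\<exists>f' g.
      continuous_on {0..1} f' \<and>
      (\<forall>t\<in>{0..1}. (f has_vector_derivative f' t) (at t within {0..1})) \<and>
      set_integrable lborel {0..1} g \<and>
      set_integrable lborel {0..1} (\<lambda>t. (g t)\<^sup>2) \<and>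
      (\<forall>t\<in>{0..1}. f' t = f' 0 + (LBINT s=0..t. g s)))"

text \<open>Theta: 1 on Omega = {y > psi x}, alpha on the boundary {y = psi x}
  (outside the closure the value is irrelevant; we put 1).\<close>
definition Theta :: "(real \<Rightarrow> real) \<Rightarrow> real \<Rightarrow> real \<times> real \<Rightarrow> real" where
  "Theta psi \<alpha> p = (if snd p = psi (fst p) then \<alpha> else 1)"

definition speed :: "(real \<Rightarrow> real) \<Rightarrow> (real \<Rightarrow> real) \<Rightarrow> real \<Rightarrow> real" where
  "speed x y t = sqrt ((d1 x t)\<^sup>2 + (d1 y t)\<^sup>2)"

definition admissible :: "(real \<Rightarrow> real) \<Rightarrow> (real \<Rightarrow> real) \<Rightarrow> (real \<Rightarrow> real) \<Rightarrow> bool" where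
  "admissible psi x y \<longleftrightarrow>
     H2_01 x \<and> H2_01 y \<and>
     (\<forall>t\<in>{0..1}. speed x y t > 0) \<and>
     (\<forall>t\<in>{0..1}. y t \<ge> psi (x t)) \<and>
     x 0 = 0 \<and> x 1 = 1 \<and> y 0 = y 1 \<and>
     d1 x 0 = d1 x 1 \<and> d1 y 0 = d1 y 1"

text \<open>The energy E = int_0^L (eps^2 |gamma_ss|^2 + Theta(gamma)) ds, written in the
  original parameter t via ds = |gamma'| dt and
  |gamma_ss|^2 = (x' y'' - x'' y')^2 / |gamma'|^6.\<close>
definition energy :: "real \<Rightarrow> real \<Rightarrow> (real \<Rightarrow> real) \<Rightarrow> (real \<Rightarrow> real) \<Rightarrow> (real \<Rightarrow> real) \<Rightarrow> real" where
  "energy \<epsilon> \<alpha> psi x y =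
     set_lebesgue_integral lebesgue {0..1}
       (\<lambda>t. \<epsilon>\<^sup>2 * (d1 x t * d2 y t - d2 x t * d1 y t)\<^sup>2 / (speed x y t) ^ 5
            + Theta psi \<alpha> (x t, y t) * speed x y t)"

definition minimizer :: "real \<Rightarrow> real \<Rightarrow> (real \<Rightarrow> real) \<Rightarrow> (real \<Rightarrow> real) \<Rightarrow> (real \<Rightarrow> real) \<Rightarrow> bool" where
  "minimizer \<epsilon> \<alpha> psi x y \<longleftrightarrow>
     admissible psi x y \<and>
     energy \<epsilon> \<alpha> psi x y = (INF c \<in> {(u, v). admissible psi u v}. energy \<epsilon> \<alpha> psi (fst c) (snd c))"

definition graph_curve :: "(real \<Rightarrow> real) \<Rightarrow> (real \<Rightarrow> real) \<Rightarrow> bool" where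
  "graph_curve x y \<longleftrightarrow> (\<forall>t\<in>{0..1}. d1 x t > 0)"

end

(* If x' is somewhere <= 0, the tangent z = x' + i y' of a minimizer, a closed (z 1 = z 0)
   nonvanishing absolutely continuous curve in the complex plane, meets the closed left
   half-plane; since the integrals of x' and y' over [0,1] are 1 and 0, it also meets the
   open right half-plane and both closed upper and lower half-planes. Writing
   z = |z| exp (i theta) with theta' = Im (z'/z) = kappa |z|, either theta 1 - theta 0 is a
   nonzero multiple of 2 pi, or theta oscillates by at least pi/2 and comes back; in both
   cases the total turning int |theta'| is at least pi. By Cauchy-Schwarz the bending energy
   int kappa^2 ds is at least pi^2 / L, and Theta >= alpha, so E >= pi^2 eps^2 / L + alpha L,
   which exceeds 1 for every length L >= 1 when (pi^2 eps^2 + 1) alpha >= 1. A horizontal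
   segment above the graph of psi has energy exactly 1. *)

theory Submission
  imports Defs
begin

section \<open>Lebesgue differentiation\<close>

lemma decreasing_open_supersets:
  fixes A :: "'a::euclidean_space set"
  assumes A: "A \<in> sets lebesgue"
  obtains W where "\<And>n. open (W n)" "\<And>n. A \<subseteq> W n" "\<And>n. W (Suc n) \<subseteq> W n"
    "negligible ((\<Inter>n. W n) - A)"
proof -
  have "\<exists>V. open V \<and> A \<subseteq> V \<and> V - A \<in> lmeasurable \<and> measure lebesgue (V - A) < 1 / Suc n" for n
  proof -
    obtain V where V: "open V" "A \<subseteq> V" "V - A \<in> lmeasurable" "emeasure lebesgue (V - A) < ennreal (1 / Suc n)"
      using sets_lebesgue_outer_open[OF A, of "1 / Suc n"] by auto
    then show ?thesis
      by (intro exI[of _ V]) (simp add: emeasure_eq_measure2 ennreal_less_iff)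
  qed
  then obtain V where V: "\<And>n. open (V n)" "\<And>n. A \<subseteq> V n" "\<And>n. V n - A \<in> lmeasurable"
     "\<And>n. measure lebesgue (V n - A) < 1 / Suc n"
    by metis
  define W where "W n = (\<Inter>k\<le>n. V k)" for n
  have "negligible ((\<Inter>n. W n) - A)"
  proof (subst negligible_outer_le, intro allI impI)
    fix e :: real assume "e > 0"
    then obtain n :: nat where n: "1 / Suc n < e"
      using reals_Archimedean by (auto simp: inverse_eq_divide)
    have "(\<Inter>n. W n) - A \<subseteq> V n - A"
      by (auto simp: W_def)
    then show "\<exists>T. (\<Inter>n. W n) - A \<subseteq> T \<and> T \<in> lmeasurable \<and> measure lebesgue T \<le> e"
      using V(3,4)[of n] n by (intro exI[of _ "V n - A"]) auto
  qed
  moreover have "open (W n)" "A \<subseteq> W n" "W (Suc n) \<subseteq> W n" for n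
    unfolding W_def using V(1,2) by auto
  ultimately show ?thesis using that by blast
qed

lemma open_superset_small_integral:
  fixes \<phi> :: "'a::euclidean_space \<Rightarrow> real"
  assumes \<phi>: "\<phi> absolutely_integrable_on S" and S: "S \<in> sets lebesgue" and nonneg: "\<And>t. 0 \<le> \<phi> t"
    and A: "A \<in> sets lebesgue" and zero: "\<And>t. t \<in> A \<Longrightarrow> \<phi> t = 0" and "\<epsilon> > 0"
  obtains V where "open V" "A \<subseteq> V" "integral (V \<inter> S) \<phi> < \<epsilon>"
proof -
  obtain W where W_open: "\<And>n. open (W n)" and A_W: "\<And>n. A \<subseteq> W n"
    and W_decseq: "\<And>n. W (Suc n) \<subseteq> W n" and W_neg: "negligible ((\<Inter>n. W n) - A)"
    using decreasing_open_supersets[OF A] by blast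
  define f where "f k t = indicator (W k) t * \<phi> t" for k t
  define h where "h t = indicator (\<Inter>k. W k) t * \<phi> t" for t
  have f_integrable: "f k integrable_on S" for k
  proof -
    have "\<phi> absolutely_integrable_on (W k \<inter> S)"
      by (rule set_integrable_subset[OF \<phi>]) (use W_open S in auto)
    then have "f k absolutely_integrable_on S"
      by (simp add: f_def set_integrable_def indicator_inter_arith mult.assoc mult.left_commute)
    then show ?thesis
      by (rule set_lebesgue_integral_eq_integral(1))
  qed
  have integral_f: "integral (W k \<inter> S) \<phi> = integral S (f k)" for k
  proof -
    have "f k = (\<lambda>t. if t \<in> W k then \<phi> t else 0)"
      by (auto simp: f_def indicator_def fun_eq_iff)
    then show ?thesis
      by (simp add: integral_restrict_Int flip: Int_commute)
  qed
  have "h integrable_on S \<and> (\<lambda>k. integral S (f k)) \<longlonglongrightarrow> integral S h"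
  proof (rule monotone_convergence_decreasing[OF f_integrable])
    show "f (Suc k) t \<le> f k t" for k t
      using W_decseq[of k] nonneg[of t] by (auto simp: f_def indicator_def)
    show "(\<lambda>k. f k t) \<longlonglongrightarrow> h t" for t
    proof (cases "t \<in> (\<Inter>k. W k)")
      case True
      then show ?thesis by (simp add: f_def h_def)
    next
      case False
      then obtain k0 where "t \<notin> W k0" by auto
      then have "\<forall>k\<ge>k0. t \<notin> W k"
        using W_decseq by (metis lift_Suc_antimono_le subsetD)
      then have "\<forall>\<^sub>F k in sequentially. f k t = h t"
        using False unfolding eventually_sequentially f_def h_def by (intro exI[of _ k0]) auto
      then show ?thesis by (rule tendsto_eventually)
    qed
    have "0 \<le> integral S (f k)" "integral S (f k) \<le> integral S \<phi>" for k
      using f_integrable \<phi> nonneg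
      by (auto intro!: integral_nonneg integral_le simp: f_def indicator_def set_lebesgue_integral_eq_integral(1))
    then show "bounded (range (\<lambda>k. integral S (f k)))"
      by (intro boundedI[where B="integral S \<phi>"]) fastforce
  qed
  moreover have "h t = 0" if "t \<notin> (\<Inter>k. W k) - A" for t
    using that by (auto simp: h_def zero indicator_def)
  then have "integral S h = 0"
    using W_neg integral_spike[of "(\<Inter>k. W k) - A" S "\<lambda>t. 0" h] by simp
  ultimately have "\<forall>\<^sub>F k in sequentially. integral S (f k) < \<epsilon>"
    using order_tendstoD(2)[of _ "integral S h" sequentially \<epsilon>] \<open>\<epsilon> > 0\<close> by simp
  then obtain k where "integral S (f k) < \<epsilon>"
    unfolding eventually_sequentially by blast
  then show ?thesis
    using that W_open A_W integral_f by metis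
qed

text \<open>One half of the Lebesgue point condition at \<open>t\<close>; the other half is the same
  condition for \<open>-g\<close>.\<close>

definition local_averages_le :: "(real \<Rightarrow> real) \<Rightarrow> real \<Rightarrow> real \<Rightarrow> real \<Rightarrow> real \<Rightarrow> bool" where
  "local_averages_le g a b q t \<longleftrightarrow> (\<exists>d>0. \<forall>u v. u \<le> t \<longrightarrow> t \<le> v \<longrightarrow> u < v \<longrightarrow> v - u < d \<longrightarrow>
      a \<le> u \<longrightarrow> v \<le> b \<longrightarrow> integral {u..v} g \<le> q * (v - u))"

lemma disjoint_balls_large_averages_measure_le:
  fixes g \<phi> :: "real \<Rightarrow> real" and F :: "(real \<times> real) set"
  assumes F: "finite F" "pairwise (\<lambda>i j. disjnt (cball (fst i) (snd i)) (cball (fst j) (snd j))) F"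
    and S: "S \<in> sets lebesgue" and g: "g absolutely_integrable_on S" and \<phi>: "\<phi> absolutely_integrable_on S"
    and \<phi>_ge: "\<And>t. t \<in> S \<Longrightarrow> g t - p \<le> \<phi> t" and \<phi>_nonneg: "\<And>t. 0 \<le> \<phi> t" and "p \<le> q"
    and balls: "\<And>i. i \<in> F \<Longrightarrow> 0 < snd i \<and> cball (fst i) (snd i) \<subseteq> S \<and>
      q * (2 * snd i) < integral (cball (fst i) (snd i)) g"
  shows "(q - p) * measure lebesgue (\<Union>i\<in>F. cball (fst i) (snd i)) \<le> integral S \<phi>"
proof -
  let ?B = "\<lambda>i. cball (fst i) (snd i)"
  have integrable: "f integrable_on T" if "f absolutely_integrable_on S" "T \<in> sets lebesgue" "T \<subseteq> S"
    for f :: "real \<Rightarrow> real" and T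
    using set_integrable_subset[OF that] set_lebesgue_integral_eq_integral(1) by blast
  have "(q - p) * (2 * snd i) \<le> integral (?B i) \<phi>" if i: "i \<in> F" for i
  proof -
    have g_B: "g integrable_on ?B i"
      using balls[OF i] by (intro integrable[OF g]) auto
    have p_B: "(\<lambda>t. p) integrable_on ?B i"
      by (intro integrable_on_const lmeasurable_cball)
    have "integral (?B i) (\<lambda>t. g t - p) = integral (?B i) g - integral (?B i) (\<lambda>t. p)"
      by (rule integral_diff[OF g_B p_B])
    also have "integral (?B i) (\<lambda>t. p) = p * (2 * snd i)"
      using balls[OF i] by (simp add: cball_eq_atLeastAtMost content_real)
    finally have "integral (?B i) (\<lambda>t. g t - p) = integral (?B i) g - p * (2 * snd i)" .
    moreover have "integral (?B i) (\<lambda>t. g t - p) \<le> integral (?B i) \<phi>"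
      using balls[OF i] g_B p_B \<phi>_ge by (intro integral_le integrable[OF \<phi>] integrable_diff) auto
    moreover have "(q - p) * (2 * snd i) = q * (2 * snd i) - p * (2 * snd i)"
      by (rule left_diff_distrib)
    ultimately show ?thesis
      using balls[OF i] by linarith
  qed
  then have "(q - p) * (\<Sum>i\<in>F. 2 * snd i) \<le> (\<Sum>i\<in>F. integral (?B i) \<phi>)"
    unfolding sum_distrib_left by (rule sum_mono)
  also have "(\<Sum>i\<in>F. integral (?B i) \<phi>) = integral (\<Union>i\<in>F. ?B i) \<phi>"
  proof -
    have "pairwise (\<lambda>i i'. negligible (?B i \<inter> ?B i')) F"
      using F(2) unfolding pairwise_def disjnt_def by auto
    then have "(\<phi> has_integral (\<Sum>i\<in>F. integral (?B i) \<phi>)) (\<Union>i\<in>F. ?B i)"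
      using balls by (intro has_integral_UN[OF F(1)] integrable_integral integrable[OF \<phi>]) auto
    then show ?thesis by (simp add: integral_unique)
  qed
  also have "\<dots> \<le> integral S \<phi>"
  proof (rule integral_subset_le)
    show U: "(\<Union>i\<in>F. ?B i) \<subseteq> S" using balls by blast
    have "(\<Union>i\<in>F. ?B i) \<in> sets lebesgue" by (rule sets.finite_UN[OF F(1)]) simp
    then show "\<phi> integrable_on (\<Union>i\<in>F. ?B i)" using U by (intro integrable[OF \<phi>])
    show "\<phi> integrable_on S" using S by (intro integrable[OF \<phi>]) auto
  qed (simp add: \<phi>_nonneg)
  finally have "(q - p) * (\<Sum>i\<in>F. 2 * snd i) \<le> integral S \<phi>" .
  moreover have "measure lebesgue (\<Union>i\<in>F. ?B i) \<le> (\<Sum>i\<in>F. 2 * snd i)"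
  proof -
    have "measure lebesgue (\<Union>i\<in>F. ?B i) \<le> (\<Sum>i\<in>F. measure lebesgue (?B i))"
      by (rule measure_UNION_le) (auto simp: F)
    also have "\<dots> = (\<Sum>i\<in>F. 2 * snd i)"
      using balls by (intro sum.cong) (auto simp: cball_eq_atLeastAtMost less_imp_le)
    finally show ?thesis .
  qed
  ultimately show ?thesis
    using \<open>p \<le> q\<close> by (meson mult_left_mono diff_ge_0_iff_ge order_trans)
qed

lemma negligible_not_local_averages_le:
  fixes g :: "real \<Rightarrow> real"
  assumes g: "g absolutely_integrable_on {a..b}" and "p < q"
  shows "negligible {t \<in> {a..b}. g t < p \<and> \<not> local_averages_le g a b q t}"
    (is "negligible ?E")
proof (subst negligible_outer_le, intro allI impI)
  fix e :: real assume "e > 0"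
  define \<phi> where "\<phi> t = max 0 (g t - p)" for t
  have \<phi>: "\<phi> absolutely_integrable_on {a..b}"
    unfolding \<phi>_def
    by (intro absolutely_integrable_max_1 set_integral_diff(1) g absolutely_integrable_on_const) auto
  define A where "A = {a..b} \<inter> {t. indicator {a..b} t * g t \<in> {..<p}}"
  have "(\<lambda>t. indicator {a..b} t * g t) \<in> borel_measurable lebesgue"
    using g unfolding set_integrable_def by (auto dest: borel_measurable_integrable)
  then have A_sets: "A \<in> sets lebesgue"
    unfolding A_def by (intro sets.Int lebesgue_measurable_vimage_borel) auto
  have "?E \<subseteq> A" by (auto simp: A_def)
  obtain V where V: "open V" "A \<subseteq> V" and V_small: "integral (V \<inter> {a..b}) \<phi> < (q - p) * e"
    by (rule open_superset_small_integral[OF \<phi> _ _ A_sets, of "(q - p) * e"])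
       (use \<open>p < q\<close> \<open>e > 0\<close> in \<open>auto simp: A_def \<phi>_def\<close>)
  define K where "K = {(c, r). 0 < r \<and> cball c r \<subseteq> V \<inter> {a..b} \<and> q * (2 * r) < integral (cball c r) g}"
  obtain C where C: "countable C" "C \<subseteq> K"
     and C_disj: "pairwise (\<lambda>i j. disjnt (cball (fst i) (snd i)) (cball (fst j) (snd j))) C"
     and C_covers: "negligible (?E - (\<Union>i\<in>C. cball (fst i) (snd i)))"
  proof (rule Vitali_covering_theorem_cballs[of K snd ?E fst])
    show "0 < snd i" if "i \<in> K" for i using that by (auto simp: K_def)
    fix t d :: real assume t: "t \<in> ?E" and "0 < d"
    then have "t \<in> V" using \<open>?E \<subseteq> A\<close> V by auto
    then obtain \<rho> where "\<rho> > 0" and \<rho>: "ball t \<rho> \<subseteq> V"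
      using V(1) open_contains_ball by blast
    obtain u v where uv: "u \<le> t" "t \<le> v" "u < v" "v - u < min d \<rho>" "a \<le> u" "v \<le> b"
        "q * (v - u) < integral {u..v} g"
      using t \<open>0 < d\<close> \<open>\<rho> > 0\<close> unfolding local_averages_le_def
      by (auto dest!: spec[of _ "min d \<rho>"] simp: not_le)
    have "{u..v} \<subseteq> ball t \<rho>" using uv by (auto simp: dist_real_def)
    then have "{u..v} \<subseteq> V \<inter> {a..b}" using \<rho> uv by auto
    moreover define c r where "c = (u + v) / 2" and "r = (v - u) / 2"
    then have cr: "c - r = u" "c + r = v" "2 * r = v - u" and "0 < r" "r < d"
      using uv by (simp_all add: field_simps)
    ultimately show "\<exists>i. i \<in> K \<and> t \<in> cball (fst i) (snd i) \<and> snd i < d"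
      using uv \<open>0 < r\<close> \<open>r < d\<close> by (intro exI[of _ "(c, r)"]) (simp add: K_def cball_eq_atLeastAtMost cr)
  qed
  have bound: "measure lebesgue (\<Union>i\<in>F. cball (fst i) (snd i)) \<le> e" if F: "F \<subseteq> C" "finite F" for F
  proof -
    have "(q - p) * measure lebesgue (\<Union>i\<in>F. cball (fst i) (snd i)) \<le> integral (V \<inter> {a..b}) \<phi>"
    proof (rule disjoint_balls_large_averages_measure_le[OF F(2) pairwise_subset[OF C_disj F(1)]])
      show "V \<inter> {a..b} \<in> sets lebesgue" using V(1) by auto
      show "g absolutely_integrable_on V \<inter> {a..b}" "\<phi> absolutely_integrable_on V \<inter> {a..b}"
        using V(1) by (auto intro: set_integrable_subset[OF g] set_integrable_subset[OF \<phi>])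
      show "0 < snd i \<and> cball (fst i) (snd i) \<subseteq> V \<inter> {a..b} \<and>
          q * (2 * snd i) < integral (cball (fst i) (snd i)) g" if "i \<in> F" for i
      proof -
        have "i \<in> K" using that F C by auto
        then show ?thesis by (auto simp: K_def)
      qed
    qed (use \<open>p < q\<close> in \<open>auto simp: \<phi>_def\<close>)
    then have "(q - p) * measure lebesgue (\<Union>i\<in>F. cball (fst i) (snd i)) < (q - p) * e"
      using V_small by linarith
    then show ?thesis
      using \<open>p < q\<close> by (simp add: mult_less_cancel_left_pos less_imp_le)
  qed
  define W where "W = (\<Union>i\<in>C. cball (fst i) (snd i))"
  have W: "W \<in> lmeasurable" "measure lebesgue W \<le> e"
    unfolding W_def by (rule fmeasurable_UN_bound[OF C(1) _ bound] measure_UN_bound[OF C(1) _ bound], simp, assumption+)+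
  have N: "?E - W \<in> lmeasurable" "measure lebesgue (?E - W) = 0"
    using C_covers unfolding W_def by (auto intro: negligible_imp_measurable negligible_imp_measure0)
  have "measure lebesgue (W \<union> (?E - W)) \<le> e"
    using measure_Un_le[of W lebesgue "?E - W"] W N by auto
  then show "\<exists>T. ?E \<subseteq> T \<and> T \<in> lmeasurable \<and> measure lebesgue T \<le> e"
    using fmeasurable.Un[OF W(1) N(1)] by (intro exI[of _ "W \<union> (?E - W)"]) auto
qed

lemma local_averages_le_mono:
  "local_averages_le g a b q t \<Longrightarrow> q \<le> q' \<Longrightarrow> local_averages_le g a b q' t"
  unfolding local_averages_le_def by (meson mult_right_mono diff_ge_0_iff_ge less_imp_le order_trans)

lemma negligible_not_local_averages_le_above:
  fixes g :: "real \<Rightarrow> real"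
  assumes g: "g absolutely_integrable_on {a..b}"
  shows "negligible {t \<in> {a..b}. \<exists>e>0. \<not> local_averages_le g a b (g t + e) t}"
proof (rule negligible_subset)
  define E where "E pq = {t \<in> {a..b}. g t < fst pq \<and> \<not> local_averages_le g a b (snd pq) t}" for pq
  define I :: "(real \<times> real) set" where "I = {pq \<in> \<rat> \<times> \<rat>. fst pq < snd pq}"
  have "countable I"
    unfolding I_def by (rule countable_subset[of _ "\<rat> \<times> \<rat>"]) (auto simp: countable_rat)
  then show "negligible (\<Union>(E ` I))"
    using negligible_not_local_averages_le[OF g] by (intro negligible_countable_Union) (auto simp: E_def I_def)
  show "{t \<in> {a..b}. \<exists>e>0. \<not> local_averages_le g a b (g t + e) t} \<subseteq> \<Union>(E ` I)"
  proof
    fix t assume "t \<in> {t \<in> {a..b}. \<exists>e>0. \<not> local_averages_le g a b (g t + e) t}"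
    then obtain e where t: "t \<in> {a..b}" and "e > 0" and not_le: "\<not> local_averages_le g a b (g t + e) t"
      by auto
    obtain p where p: "p \<in> \<rat>" "g t < p" "p < g t + e / 2"
      using Rats_dense_in_real[of "g t" "g t + e / 2"] \<open>e > 0\<close> by auto
    obtain q where q: "q \<in> \<rat>" "g t + e / 2 < q" "q < g t + e"
      using Rats_dense_in_real[of "g t + e / 2" "g t + e"] \<open>e > 0\<close> by auto
    have "\<not> local_averages_le g a b q t"
      using not_le local_averages_le_mono[of g a b q t "g t + e"] q by auto
    then have "t \<in> E (p, q)" and "(p, q) \<in> I"
      using t p q by (auto simp: E_def I_def)
    then show "t \<in> \<Union>(E ` I)" by blast
  qed
qed

lemma integral_has_real_derivative_if_averages_converge:
  fixes g :: "real \<Rightarrow> real"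
  assumes g: "g integrable_on {a..b}" and t: "t \<in> {a..b}"
    and average: "\<And>e. e > 0 \<Longrightarrow> \<exists>d>0. \<forall>u v. u \<le> t \<longrightarrow> t \<le> v \<longrightarrow> u < v \<longrightarrow> v - u < d \<longrightarrow>
      a \<le> u \<longrightarrow> v \<le> b \<longrightarrow> \<bar>integral {u..v} g / (v - u) - g t\<bar> \<le> e"
  shows "((\<lambda>s. integral {a..s} g) has_real_derivative g t) (at t within {a..b})"
  unfolding has_field_derivative_iff tendsto_iff eventually_at
proof (intro allI impI)
  fix e :: real assume "e > 0"
  then obtain d where "d > 0" and d: "\<forall>u v. u \<le> t \<longrightarrow> t \<le> v \<longrightarrow> u < v \<longrightarrow> v - u < d \<longrightarrow>
      a \<le> u \<longrightarrow> v \<le> b \<longrightarrow> \<bar>integral {u..v} g / (v - u) - g t\<bar> \<le> e / 2"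
    using average[of "e / 2"] by auto
  have g_sub: "g integrable_on {u..v}" if "{u..v} \<subseteq> {a..b}" for u v
    using integrable_on_subinterval[OF g that] .
  show "\<exists>d>0. \<forall>s\<in>{a..b}. s \<noteq> t \<and> dist s t < d \<longrightarrow>
      dist ((integral {a..s} g - integral {a..t} g) / (s - t)) (g t) < e"
  proof (intro exI[of _ d] conjI ballI impI)
    fix s assume s: "s \<in> {a..b}" "s \<noteq> t \<and> dist s t < d"
    have "(integral {a..s} g - integral {a..t} g) / (s - t) = integral {min s t..max s t} g / (max s t - min s t)"
    proof (cases "t < s")
      case True
      then have "integral {a..s} g = integral {a..t} g + integral {t..s} g"
        using t s by (intro Henstock_Kurzweil_Integration.integral_combine[symmetric] g_sub) auto
      then show ?thesis using True by simp
    next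
      case False
      then have "integral {a..t} g = integral {a..s} g + integral {s..t} g"
        using t s by (intro Henstock_Kurzweil_Integration.integral_combine[symmetric] g_sub) auto
      then show ?thesis using False s by (simp add: divide_simps) (simp add: algebra_simps)
    qed
    moreover have "\<bar>integral {min s t..max s t} g / (max s t - min s t) - g t\<bar> \<le> e / 2"
      using d s t by (cases "t < s") (auto simp: dist_real_def)
    ultimately show "dist ((integral {a..s} g - integral {a..t} g) / (s - t)) (g t) < e"
      using \<open>e > 0\<close> by (simp add: dist_real_def)
  qed (rule \<open>d > 0\<close>)
qed

theorem lebesgue_differentiation:
  fixes g :: "real \<Rightarrow> real"
  assumes g: "g absolutely_integrable_on {a..b}"
  obtains N where "negligible N"
    "\<And>t. t \<in> {a..b} - N \<Longrightarrow> ((\<lambda>s. integral {a..s} g) has_real_derivative g t) (at t within {a..b})"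
proof
  define N where "N = {t \<in> {a..b}. \<exists>e>0. \<not> local_averages_le g a b (g t + e) t}
    \<union> {t \<in> {a..b}. \<exists>e>0. \<not> local_averages_le (\<lambda>s. - g s) a b (- g t + e) t}"
  have "(\<lambda>s. - g s) absolutely_integrable_on {a..b}"
    using set_integrable_mult_right[OF g, of "- 1"] by simp
  then show "negligible N"
    unfolding N_def by (intro negligible_Un negligible_not_local_averages_le_above g)
  fix t assume t: "t \<in> {a..b} - N"
  show "((\<lambda>s. integral {a..s} g) has_real_derivative g t) (at t within {a..b})"
  proof (rule integral_has_real_derivative_if_averages_converge)
    show "g integrable_on {a..b}"
      using g by (simp add: absolutely_integrable_on_def)
    fix e :: real assume "e > 0"
    obtain d1 where "d1 > 0" and d1: "\<forall>u v. u \<le> t \<longrightarrow> t \<le> v \<longrightarrow> u < v \<longrightarrow> v - u < d1 \<longrightarrow>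
        a \<le> u \<longrightarrow> v \<le> b \<longrightarrow> integral {u..v} g \<le> (g t + e) * (v - u)"
      using t \<open>e > 0\<close> unfolding N_def local_averages_le_def by blast
    obtain d2 where "d2 > 0" and d2: "\<forall>u v. u \<le> t \<longrightarrow> t \<le> v \<longrightarrow> u < v \<longrightarrow> v - u < d2 \<longrightarrow>
        a \<le> u \<longrightarrow> v \<le> b \<longrightarrow> - integral {u..v} g \<le> (- g t + e) * (v - u)"
      using t \<open>e > 0\<close> unfolding N_def local_averages_le_def by (auto simp: integral_neg)
    show "\<exists>d>0. \<forall>u v. u \<le> t \<longrightarrow> t \<le> v \<longrightarrow> u < v \<longrightarrow> v - u < d \<longrightarrow>
        a \<le> u \<longrightarrow> v \<le> b \<longrightarrow> \<bar>integral {u..v} g / (v - u) - g t\<bar> \<le> e"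
    proof (intro exI[of _ "min d1 d2"] conjI allI impI)
      fix u v assume uv: "u \<le> t" "t \<le> v" "u < v" "v - u < min d1 d2" "a \<le> u" "v \<le> b"
      have "integral {u..v} g \<le> (g t + e) * (v - u)"
        using d1 uv by simp
      moreover have "- integral {u..v} g \<le> (- g t + e) * (v - u)"
        using d2 uv by simp
      then have "(g t - e) * (v - u) \<le> integral {u..v} g"
        by (simp add: algebra_simps)
      ultimately show "\<bar>integral {u..v} g / (v - u) - g t\<bar> \<le> e"
        using uv by (simp add: abs_le_iff field_simps)
    qed (use \<open>d1 > 0\<close> \<open>d2 > 0\<close> in auto)
  qed (use t in auto)
qed

section \<open>Continuous logarithm of an absolutely continuous curve\<close>

lemma integral_Icc_diff:
  fixes f :: "real \<Rightarrow> 'a::banach"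
  assumes "f integrable_on {a..b}" "a \<le> s" "s \<le> t" "t \<le> b"
  shows "integral {a..t} f - integral {a..s} f = integral {s..t} f"
proof -
  have "integral {a..t} f = integral {a..s} f + integral {s..t} f"
    using assms by (intro Henstock_Kurzweil_Integration.integral_combine[symmetric]
        integrable_on_subinterval[OF assms(1)]) auto
  then show ?thesis by simp
qed

lemma continuous_on_integral_eq:
  fixes F f :: "real \<Rightarrow> 'a::banach"
  assumes "f integrable_on {a..b}" "\<And>t. t \<in> {a..b} \<Longrightarrow> F t = F a + integral {a..t} f"
  shows "continuous_on {a..b} F"
  by (rule continuous_on_eq[OF continuous_on_add[OF continuous_on_const[of _ "F a"]
        indefinite_integral_continuous_1[OF assms(1)]]]) (simp add: assms(2)[symmetric])

lemma norm_diff_le_if_small_increments: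
  fixes D :: "real \<Rightarrow> 'a::real_normed_vector" and \<mu> :: "real \<Rightarrow> real"
  assumes "\<delta> > 0"
    and small: "\<And>s t. 0 \<le> s \<Longrightarrow> s \<le> t \<Longrightarrow> t \<le> 1 \<Longrightarrow> t - s < \<delta> \<Longrightarrow>
      norm (D t - D s) \<le> \<eta> * (\<mu> t - \<mu> s)"
    and t: "0 \<le> t" "t \<le> 1"
  shows "norm (D t - D 0) \<le> \<eta> * (\<mu> t - \<mu> 0)"
proof -
  obtain n :: nat where n: "1 / Suc n < \<delta>"
    using reals_Archimedean[OF \<open>\<delta> > 0\<close>] by (auto simp: inverse_eq_divide)
  define N where "N = Suc n"
  have "real N > 0" by (simp add: N_def)
  have "t / N \<le> 1 / N"
    using t \<open>real N > 0\<close> by (intro divide_right_mono) auto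
  then have step: "t / N < \<delta>"
    using n by (simp add: N_def)
  have "norm (D (k * t / N) - D 0) \<le> \<eta> * (\<mu> (k * t / N) - \<mu> 0)" if "k \<le> N" for k :: nat
    using that
  proof (induction k)
    case 0
    then show ?case by simp
  next
    case (Suc k)
    define s s' where "s = k * t / N" and "s' = Suc k * t / N"
    have "0 \<le> s" using t by (simp add: s_def)
    have "s' - s = t / N" using \<open>real N > 0\<close> by (simp add: s_def s'_def field_simps)
    moreover have "0 \<le> t / N" using t by simp
    ultimately have "s \<le> s'" by linarith
    have "Suc k * t \<le> N * t" using Suc.prems t by (intro mult_right_mono) auto
    also have "\<dots> \<le> N" using t by (intro mult_left_le) auto
    finally have "s' \<le> 1" using \<open>real N > 0\<close> by (simp add: s'_def)
    have "norm (D s' - D s) \<le> \<eta> * (\<mu> s' - \<mu> s)"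
      using small \<open>0 \<le> s\<close> \<open>s \<le> s'\<close> \<open>s' \<le> 1\<close> \<open>s' - s = t / N\<close> step by auto
    moreover have "norm (D s - D 0) \<le> \<eta> * (\<mu> s - \<mu> 0)"
      using Suc by (simp add: s_def)
    ultimately have "norm (D s' - D 0) \<le> \<eta> * (\<mu> s' - \<mu> 0)"
      using norm_triangle_ineq[of "D s' - D s" "D s - D 0"] by (simp add: algebra_simps)
    then show ?case by (simp add: s'_def)
  qed
  from this[of N] show ?thesis by (simp add: N_def)
qed

lemma eq_if_increments_dominated:
  fixes D :: "real \<Rightarrow> 'a::real_normed_vector" and \<mu> :: "real \<Rightarrow> real"
  assumes mono: "\<And>s t. 0 \<le> s \<Longrightarrow> s \<le> t \<Longrightarrow> t \<le> 1 \<Longrightarrow> \<mu> s \<le> \<mu> t"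
    and small: "\<And>\<eta>. \<eta> > 0 \<Longrightarrow> \<exists>\<delta>>0. \<forall>s t. 0 \<le> s \<longrightarrow> s \<le> t \<longrightarrow> t \<le> 1 \<longrightarrow> t - s < \<delta> \<longrightarrow>
        norm (D t - D s) \<le> \<eta> * (\<mu> t - \<mu> s)"
    and t: "0 \<le> t" "t \<le> 1"
  shows "D t = D 0"
proof -
  define M where "M = \<mu> t - \<mu> 0"
  have "0 \<le> M" using mono[of 0 t] t by (simp add: M_def)
  have "norm (D t - D 0) \<le> 0 + e" if "e > 0" for e
  proof -
    have "e / (M + 1) > 0" using \<open>e > 0\<close> \<open>0 \<le> M\<close> by simp
    then obtain \<delta> where "\<delta> > 0" and \<delta>: "\<forall>s t. 0 \<le> s \<longrightarrow> s \<le> t \<longrightarrow> t \<le> 1 \<longrightarrow> t - s < \<delta> \<longrightarrow>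
        norm (D t - D s) \<le> e / (M + 1) * (\<mu> t - \<mu> s)"
      using small by blast
    have "norm (D t - D 0) \<le> e / (M + 1) * (\<mu> t - \<mu> 0)"
      by (rule norm_diff_le_if_small_increments[OF \<open>\<delta> > 0\<close> _ t]) (use \<delta> in blast)
    also have "\<dots> = e / (M + 1) * M"
      by (simp add: M_def)
    also have "\<dots> \<le> e"
      using \<open>e > 0\<close> \<open>0 \<le> M\<close> by (simp add: field_simps)
    finally show ?thesis by simp
  qed
  then have "norm (D t - D 0) \<le> 0"
    by (rule field_le_epsilon)
  then show ?thesis by simp
qed

lemma exp_minus_remainder_small:
  fixes \<eta> :: real
  assumes "\<eta> > 0"
  obtains \<kappa> where "\<kappa> > 0" "\<And>w::complex. norm w < \<kappa> \<Longrightarrow> norm (exp (- w) - 1 + w) \<le> \<eta> * norm w"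
proof -
  have "((\<lambda>w. (exp w - exp 0) / (w - 0)) \<longlongrightarrow> (1::complex)) (at 0)"
    using DERIV_exp[of "0::complex"] unfolding has_field_derivative_iff by simp
  then obtain \<kappa> where "\<kappa> > 0"
    and "\<forall>w. w \<noteq> 0 \<and> dist w 0 < \<kappa> \<longrightarrow> dist ((exp w - exp 0) / (w - 0)) (1::complex) < \<eta>"
    using assms unfolding tendsto_iff eventually_at by force
  then have \<kappa>: "\<And>w::complex. w \<noteq> 0 \<Longrightarrow> norm w < \<kappa> \<Longrightarrow> norm ((exp w - 1) / w - 1) < \<eta>"
    by (simp add: dist_norm)
  have "norm (exp (- w) - 1 + w) \<le> \<eta> * norm w" if "norm w < \<kappa>" for w :: complex
  proof (cases "w = 0")
    case False
    have "exp (- w) - 1 + w = (- w) * ((exp (- w) - 1) / (- w) - 1)"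
      using False by (simp add: field_simps)
    then have "norm (exp (- w) - 1 + w) = norm w * norm ((exp (- w) - 1) / (- w) - 1)"
      by (simp add: norm_mult)
    also have "\<dots> \<le> norm w * \<eta>"
      using \<kappa>[of "- w"] False that by (intro mult_left_mono) auto
    finally show ?thesis by (simp add: mult.commute)
  qed simp
  with \<open>\<kappa> > 0\<close> that show ?thesis by blast
qed

lemma logderiv_absolutely_integrable:
  fixes z g :: "real \<Rightarrow> complex"
  assumes "continuous_on {a..b} z" "\<And>t. t \<in> {a..b} \<Longrightarrow> z t \<noteq> 0"
    and "g absolutely_integrable_on {a..b}"
  shows "(\<lambda>t. g t / z t) absolutely_integrable_on {a..b}"
proof -
  have cont: "continuous_on {a..b} (\<lambda>t. inverse (z t))"
    using assms(1,2) by (intro continuous_intros) auto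
  have "(\<lambda>t. inverse (z t) * g t) absolutely_integrable_on {a..b}"
  proof (rule absolutely_integrable_bounded_measurable_product[OF bilinear_times])
    show "(\<lambda>t. inverse (z t)) \<in> borel_measurable (lebesgue_on {a..b})"
      using cont by (rule continuous_imp_measurable_on_sets_lebesgue) simp
    show "bounded ((\<lambda>t. inverse (z t)) ` {a..b})"
      using cont by (intro compact_imp_bounded compact_continuous_image) auto
  qed (use assms(3) in auto)
  then show ?thesis by (simp add: divide_inverse mult.commute)
qed

lemma logderiv_linearization_error:
  fixes z g :: "real \<Rightarrow> complex"
  assumes g: "g integrable_on {s..t}"
    and h: "(\<lambda>r. g r / z r) absolutely_integrable_on {s..t}"
    and z: "z t - z s = integral {s..t} g"
    and nonzero: "\<And>r. r \<in> {s..t} \<Longrightarrow> z r \<noteq> 0"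
    and close: "\<And>r. r \<in> {s..t} \<Longrightarrow> norm (z r - z t) \<le> \<eta>"
  shows "norm (z t - z s - z t * integral {s..t} (\<lambda>r. g r / z r))
    \<le> \<eta> * integral {s..t} (\<lambda>r. norm (g r / z r))"
proof -
  let ?h = "\<lambda>r. g r / z r"
  have h_int: "?h integrable_on {s..t}" "(\<lambda>r. norm (?h r)) integrable_on {s..t}"
    using h by (simp_all add: absolutely_integrable_on_def)
  have g_eq: "g r = z r * ?h r" if "r \<in> {s..t}" for r
    using nonzero[OF that] by simp
  have zh_int: "(\<lambda>r. z r * ?h r) integrable_on {s..t}"
    by (rule integrable_eq[OF g g_eq])
  have "integral {s..t} (\<lambda>r. z r * ?h r - z t * ?h r)
      = integral {s..t} (\<lambda>r. z r * ?h r) - integral {s..t} (\<lambda>r. z t * ?h r)"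
    by (rule integral_diff[OF zh_int integrable_on_mult_right[OF h_int(1)]])
  also have "integral {s..t} (\<lambda>r. z r * ?h r) = integral {s..t} g"
    by (rule integral_cong) (rule g_eq[symmetric])
  also have "integral {s..t} (\<lambda>r. z t * ?h r) = z t * integral {s..t} ?h"
    by (rule integral_mult_right)
  finally have "z t - z s - z t * integral {s..t} ?h = integral {s..t} (\<lambda>r. z r * ?h r - z t * ?h r)"
    using z by simp
  also have "\<dots> = integral {s..t} (\<lambda>r. (z r - z t) * ?h r)"
    by (simp only: left_diff_distrib)
  also have "norm \<dots> \<le> integral {s..t} (\<lambda>r. \<eta> * norm (?h r))"
  proof (rule integral_norm_bound_integral)
    have "(\<lambda>r. z r * ?h r - z t * ?h r) integrable_on {s..t}"
      using zh_int h_int(1) by (intro integrable_diff integrable_on_mult_right)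
    then show "(\<lambda>r. (z r - z t) * ?h r) integrable_on {s..t}"
      by (simp only: left_diff_distrib)
    show "(\<lambda>r. \<eta> * norm (?h r)) integrable_on {s..t}"
      using h_int(2) by (rule integrable_on_mult_right)
    show "norm ((z r - z t) * ?h r) \<le> \<eta> * norm (?h r)" if "r \<in> {s..t}" for r
      using close[OF that] unfolding norm_mult by (rule mult_right_mono) simp
  qed
  finally show ?thesis by simp
qed

lemma exp_increment_bound:
  fixes zs zt cs w :: complex
  assumes "norm (zt - zs - zt * w) \<le> \<eta>" "norm (exp (- w) - 1 + w) \<le> \<eta>"
    and "norm zt \<le> B" "norm cs \<le> C" "0 \<le> \<eta>"
  shows "norm (zt * exp (- (cs + w)) - zs * exp (- cs)) \<le> exp C * ((1 + B) * \<eta>)"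
proof -
  have "zt * exp (- (cs + w)) - zs * exp (- cs) = exp (- cs) * ((zt - zs - zt * w) + zt * (exp (- w) - 1 + w))"
    by (simp add: exp_add[symmetric] algebra_simps)
  moreover have "norm ((zt - zs - zt * w) + zt * (exp (- w) - 1 + w)) \<le> (1 + B) * \<eta>"
  proof -
    have "norm zt * norm (exp (- w) - 1 + w) \<le> B * \<eta>"
      using assms by (intro mult_mono) (auto intro: order_trans[OF norm_ge_zero])
    then show ?thesis
      using assms(1) norm_triangle_ineq[of "zt - zs - zt * w" "zt * (exp (- w) - 1 + w)"]
      unfolding norm_mult by (simp add: algebra_simps)
  qed
  moreover have "norm (exp (- cs)) \<le> exp C"
    using assms(4) abs_Re_le_cmod[of cs] by simp
  ultimately show ?thesis
    by (simp only: norm_mult) (rule mult_mono, auto)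
qed

lemma exp_logderiv_increments_small:
  fixes z g :: "real \<Rightarrow> complex"
  assumes g: "g absolutely_integrable_on {0..1}"
    and z: "\<And>t. t \<in> {0..1} \<Longrightarrow> z t = z 0 + integral {0..t} g"
    and nonzero: "\<And>t. t \<in> {0..1} \<Longrightarrow> z t \<noteq> 0" and "\<epsilon> > 0"
  defines "c \<equiv> \<lambda>t. integral {0..t} (\<lambda>r. g r / z r)"
    and "\<mu> \<equiv> \<lambda>t. integral {0..t} (\<lambda>r. norm (g r / z r))"
  shows "\<exists>\<delta>>0. \<forall>s t. 0 \<le> s \<longrightarrow> s \<le> t \<longrightarrow> t \<le> 1 \<longrightarrow> t - s < \<delta> \<longrightarrow>
    norm (z t * exp (- c t) - z s * exp (- c s)) \<le> \<epsilon> * (\<mu> t - \<mu> s)"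
proof -
  have g_int: "g integrable_on {0..1}"
    using g by (simp add: absolutely_integrable_on_def)
  have z_cont: "continuous_on {0..1} z"
    by (rule continuous_on_integral_eq[OF g_int z])
  have h: "(\<lambda>r. g r / z r) absolutely_integrable_on {0..1}"
    using z_cont nonzero g by (rule logderiv_absolutely_integrable)
  then have h_int: "(\<lambda>r. g r / z r) integrable_on {0..1}" "(\<lambda>r. norm (g r / z r)) integrable_on {0..1}"
    by (simp_all add: absolutely_integrable_on_def)
  obtain B where B: "\<And>s. s \<in> {0..1} \<Longrightarrow> norm (z s) \<le> B"
    using continuous_on_compact_bound[OF compact_Icc z_cont] by blast
  obtain C where C: "\<And>s. s \<in> {0..1} \<Longrightarrow> norm (c s) \<le> C"
    using continuous_on_compact_bound[OF compact_Icc indefinite_integral_continuous_1[OF h_int(1)]]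
    unfolding c_def by blast
  define \<eta> where "\<eta> = \<epsilon> / (exp C * (1 + \<bar>B\<bar>))"
  have "\<eta> > 0" using \<open>\<epsilon> > 0\<close> by (simp add: \<eta>_def add_pos_nonneg)
  obtain \<kappa> where "\<kappa> > 0" and \<kappa>: "\<And>w::complex. norm w < \<kappa> \<Longrightarrow> norm (exp (- w) - 1 + w) \<le> \<eta> * norm w"
    using exp_minus_remainder_small[OF \<open>\<eta> > 0\<close>] by blast
  obtain \<delta>1 where "\<delta>1 > 0" and \<delta>1: "\<forall>s\<in>{0..1}. \<forall>r\<in>{0..1}. dist r s < \<delta>1 \<longrightarrow> dist (z r) (z s) < \<eta>"
    using compact_uniformly_continuous[OF z_cont compact_Icc] \<open>\<eta> > 0\<close>
    unfolding uniformly_continuous_on_def by metis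
  have "uniformly_continuous_on {0..1} \<mu>"
    unfolding \<mu>_def by (rule compact_uniformly_continuous[OF indefinite_integral_continuous_1[OF h_int(2)] compact_Icc])
  then obtain \<delta>2 where "\<delta>2 > 0" and \<delta>2: "\<forall>s\<in>{0..1}. \<forall>r\<in>{0..1}. dist r s < \<delta>2 \<longrightarrow> dist (\<mu> r) (\<mu> s) < \<kappa>"
    using \<open>\<kappa> > 0\<close> unfolding uniformly_continuous_on_def by metis
  have "norm (z t * exp (- c t) - z s * exp (- c s)) \<le> \<epsilon> * (\<mu> t - \<mu> s)"
    if st: "0 \<le> s" "s \<le> t" "t \<le> 1" and "t - s < min \<delta>1 \<delta>2" for s t
  proof -
    have c_diff: "c t - c s = integral {s..t} (\<lambda>r. g r / z r)"
      and \<mu>_diff: "\<mu> t - \<mu> s = integral {s..t} (\<lambda>r. norm (g r / z r))"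
      unfolding c_def \<mu>_def using integral_Icc_diff[OF h_int(1) st] integral_Icc_diff[OF h_int(2) st] by simp_all
    have h_st: "(\<lambda>r. g r / z r) absolutely_integrable_on {s..t}"
      using absolutely_integrable_on_subinterval[OF h, of s t] st by simp
    have "norm (z t - z s - z t * (c t - c s)) \<le> \<eta> * (\<mu> t - \<mu> s)"
      unfolding c_diff \<mu>_diff
    proof (rule logderiv_linearization_error[OF _ h_st])
      show "g integrable_on {s..t}" by (rule integrable_on_subinterval[OF g_int]) (use st in auto)
      show "z t - z s = integral {s..t} g"
        using z[of s] z[of t] integral_Icc_diff[OF g_int st] st by simp
      show "norm (z r - z t) \<le> \<eta>" if "r \<in> {s..t}" for r
      proof -
        have "dist r t < \<delta>1"
          using that \<open>t - s < min \<delta>1 \<delta>2\<close> by (simp add: dist_real_def)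
        then have "dist (z r) (z t) < \<eta>"
          using \<delta>1 that st by simp
        then show ?thesis by (simp add: dist_norm)
      qed
    qed (use nonzero st in auto)
    moreover have "norm (c t - c s) \<le> \<mu> t - \<mu> s"
      unfolding c_diff \<mu>_diff using st
      by (intro integral_norm_bound_integral integrable_on_subinterval[OF h_int(1)]
          integrable_on_subinterval[OF h_int(2)]) auto
    moreover have "\<mu> t - \<mu> s < \<kappa>"
    proof -
      have "dist t s < \<delta>2"
        using st \<open>t - s < min \<delta>1 \<delta>2\<close> by (simp add: dist_real_def)
      then have "dist (\<mu> t) (\<mu> s) < \<kappa>"
        using \<delta>2 st by simp
      then show ?thesis by (simp add: dist_real_def)
    qed
    ultimately have "norm (exp (- (c t - c s)) - 1 + (c t - c s)) \<le> \<eta> * (\<mu> t - \<mu> s)"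
      using \<kappa>[of "c t - c s"] \<open>\<eta> > 0\<close> by (meson mult_left_mono less_imp_le order_le_less_trans order_trans)
    with \<open>norm (z t - z s - z t * (c t - c s)) \<le> \<eta> * (\<mu> t - \<mu> s)\<close>
    have "norm (z t * exp (- (c s + (c t - c s))) - z s * exp (- c s)) \<le> exp C * ((1 + \<bar>B\<bar>) * (\<eta> * (\<mu> t - \<mu> s)))"
      using B[of t] C[of s] st \<open>\<eta> > 0\<close> \<open>norm (c t - c s) \<le> \<mu> t - \<mu> s\<close>
      by (intro exp_increment_bound) (auto intro: order_trans[OF norm_ge_zero])
    also have "\<dots> = \<epsilon> * (\<mu> t - \<mu> s)"
      by (simp add: \<eta>_def add_pos_nonneg)
    finally show ?thesis by simp
  qed
  then show ?thesis
    using \<open>\<delta>1 > 0\<close> \<open>\<delta>2 > 0\<close> by (intro exI[of _ "min \<delta>1 \<delta>2"]) auto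
qed

text \<open>The lift is obtained without differentiating: by the previous lemma,
  \<open>z \<cdot> exp (- \<integral> z'/z)\<close> has increments that are small relative to those of \<open>\<integral> |z'/z|\<close>.\<close>

theorem exp_integral_logderiv:
  fixes z g :: "real \<Rightarrow> complex"
  assumes g: "g absolutely_integrable_on {0..1}"
    and z: "\<And>t. t \<in> {0..1} \<Longrightarrow> z t = z 0 + integral {0..t} g"
    and nonzero: "\<And>t. t \<in> {0..1} \<Longrightarrow> z t \<noteq> 0"
    and t: "t \<in> {0..1}"
  shows "z t = z 0 * exp (integral {0..t} (\<lambda>s. g s / z s))"
proof -
  define c where "c t = integral {0..t} (\<lambda>r. g r / z r)" for t
  have "(\<lambda>r. norm (g r / z r)) integrable_on {0..1}"
    using logderiv_absolutely_integrable[OF continuous_on_integral_eq[OF _ z] nonzero g] g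
    by (simp add: absolutely_integrable_on_def)
  then have "integral {0..s} (\<lambda>r. norm (g r / z r)) \<le> integral {0..t} (\<lambda>r. norm (g r / z r))"
    if "0 \<le> s" "s \<le> t" "t \<le> 1" for s t
    using that by (intro integral_subset_le integrable_on_subinterval) auto
  then have "z t * exp (- c t) = z 0 * exp (- c 0)"
    using exp_logderiv_increments_small[OF g z nonzero] t unfolding c_def
    by (intro eq_if_increments_dominated[of "\<lambda>t. integral {0..t} (\<lambda>r. norm (g r / z r))"]) auto
  then have "z t = z 0 * exp (c t)"
    by (simp add: c_def exp_minus field_simps)
  then show ?thesis by (simp add: c_def)
qed

section \<open>Total turning of a closed tangent\<close>

lemma angle_oscillation_ge_half_pi:
  fixes \<theta> :: "real \<Rightarrow> real"
  assumes \<theta>: "continuous_on {0..1} \<theta>"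
    and "ta \<in> {0..1}" "cos (\<theta> ta) \<le> 0" and "tb \<in> {0..1}" "cos (\<theta> tb) > 0"
    and "t3 \<in> {0..1}" "sin (\<theta> t3) \<ge> 0" and "t4 \<in> {0..1}" "sin (\<theta> t4) \<le> 0"
  obtains s t where "s \<in> {0..1}" "t \<in> {0..1}" "pi / 2 \<le> \<theta> s - \<theta> t"
proof -
  have "\<exists>s\<in>{0..1}. \<exists>t\<in>{0..1}. pi / 2 \<le> \<theta> s - \<theta> t"
  proof (rule ccontr)
    assume not_wide: "\<not> ?thesis"
    have narrow: "\<bar>\<theta> s - \<theta> t\<bar> < pi / 2" if "s \<in> {0..1}" "t \<in> {0..1}" for s t
    proof -
      have "\<not> pi / 2 \<le> \<theta> s - \<theta> t" "\<not> pi / 2 \<le> \<theta> t - \<theta> s"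
        using not_wide that by blast+
      then show ?thesis by linarith
    qed
    have cos_cont: "continuous_on {u..v} (\<lambda>t. cos (\<theta> t))" if "0 \<le> u" "v \<le> 1" for u v
      using that by (intro continuous_intros continuous_on_subset[OF \<theta>]) auto
    obtain tc where tc: "tc \<in> {0..1}" "cos (\<theta> tc) = 0"
    proof (cases "ta \<le> tb")
      case True
      then obtain x where "ta \<le> x" "x \<le> tb" "cos (\<theta> x) = 0"
        using IVT'[of "\<lambda>t. cos (\<theta> t)" ta 0 tb] assms(2-5) cos_cont[of ta tb] by auto
      then show ?thesis using assms(2,4) by (intro that[of x]) auto
    next
      case False
      then obtain x where "tb \<le> x" "x \<le> ta" "cos (\<theta> x) = 0"
        using IVT2'[of "\<lambda>t. cos (\<theta> t)" ta 0 tb] assms(2-5) cos_cont[of tb ta] by auto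
      then show ?thesis using assms(2,4) by (intro that[of x]) auto
    qed
    have sin_eq: "sin (\<theta> t) = sin (\<theta> tc) * cos (\<theta> t - \<theta> tc)" for t
      using sin_add[of "\<theta> tc" "\<theta> t - \<theta> tc"] tc(2) by simp
    have cos_pos: "cos (\<theta> t - \<theta> tc) > 0" if "t \<in> {0..1}" for t
      using narrow[OF that tc(1)] unfolding abs_less_iff by (intro cos_gt_zero_pi) linarith+
    have "sin (\<theta> tc) = 1 \<or> sin (\<theta> tc) = -1"
      using sin_cos_squared_add[of "\<theta> tc"] tc(2) by (simp add: power2_eq_1_iff)
    then show False
    proof
      assume "sin (\<theta> tc) = 1"
      then have "sin (\<theta> t4) > 0" using sin_eq[of t4] cos_pos[OF assms(8)] by simp
      then show False using assms(9) by simp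
    next
      assume "sin (\<theta> tc) = -1"
      then have "sin (\<theta> t3) < 0" using sin_eq[of t3] cos_pos[OF assms(6)] by simp
      then show False using assms(7) by simp
    qed
  qed
  then show ?thesis using that by blast
qed

theorem total_turning_ge_pi:
  fixes \<omega> \<theta> :: "real \<Rightarrow> real"
  assumes \<omega>: "\<omega> absolutely_integrable_on {0..1}"
    and \<theta>: "\<And>t. t \<in> {0..1} \<Longrightarrow> \<theta> t = \<theta> 0 + integral {0..t} \<omega>"
    and closed: "cis (\<theta> 1) = cis (\<theta> 0)"
    and "ta \<in> {0..1}" "cos (\<theta> ta) \<le> 0" and "tb \<in> {0..1}" "cos (\<theta> tb) > 0"
    and "t3 \<in> {0..1}" "sin (\<theta> t3) \<ge> 0" and "t4 \<in> {0..1}" "sin (\<theta> t4) \<le> 0"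
  shows "pi \<le> integral {0..1} (\<lambda>t. \<bar>\<omega> t\<bar>)"
proof -
  have \<omega>_int: "\<omega> integrable_on {0..1}" "(\<lambda>t. \<bar>\<omega> t\<bar>) integrable_on {0..1}"
    using \<omega> by (simp_all add: absolutely_integrable_on_def)
  define V where "V u v = integral {u..v} (\<lambda>t. \<bar>\<omega> t\<bar>)" for u v
  have \<theta>_diff: "\<bar>\<theta> v - \<theta> u\<bar> \<le> V u v" if uv: "0 \<le> u" "u \<le> v" "v \<le> 1" for u v
  proof -
    have "\<theta> v - \<theta> u = integral {u..v} \<omega>"
      using \<theta>[of u] \<theta>[of v] integral_Icc_diff[OF \<omega>_int(1) uv] uv by simp
    also have "\<bar>\<dots>\<bar> \<le> V u v"
      unfolding V_def using uv
      by (intro integral_norm_bound_integral[where f=\<omega>, simplified]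
          integrable_on_subinterval[OF \<omega>_int(1)] integrable_on_subinterval[OF \<omega>_int(2)]) auto
    finally show ?thesis .
  qed
  have three_pieces: "\<bar>\<theta> u - \<theta> 0\<bar> + \<bar>\<theta> v - \<theta> u\<bar> + \<bar>\<theta> 1 - \<theta> v\<bar> \<le> V 0 1"
    if uv: "0 \<le> u" "u \<le> v" "v \<le> 1" for u v
  proof -
    have "V 0 1 = V 0 u + V u v + V v 1"
      unfolding V_def using uv
      by (simp add: Henstock_Kurzweil_Integration.integral_combine integrable_on_subinterval[OF \<omega>_int(2)])
    with \<theta>_diff[of 0 u] \<theta>_diff[of u v] \<theta>_diff[of v 1] uv show ?thesis by simp
  qed
  have \<theta>_cont: "continuous_on {0..1} \<theta>"
    by (rule continuous_on_integral_eq[OF \<omega>_int(1) \<theta>])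
  have "sin (\<theta> 1) = sin (\<theta> 0) \<and> cos (\<theta> 1) = cos (\<theta> 0)"
    using arg_cong[OF closed, of Re] arg_cong[OF closed, of Im] by simp
  then obtain k :: int where k: "\<theta> 1 = \<theta> 0 + 2 * pi * k"
    using sin_cos_eq_iff by blast
  show ?thesis
  proof (cases "k = 0")
    case False
    then have "1 \<le> \<bar>real_of_int k\<bar>" by linarith
    then have "2 * pi * 1 \<le> 2 * pi * \<bar>real_of_int k\<bar>" by (intro mult_left_mono) auto
    then have "2 * pi \<le> \<bar>\<theta> 1 - \<theta> 0\<bar>"
      using k by (simp add: abs_mult)
    then show ?thesis
      using \<theta>_diff[of 0 1] pi_gt_zero by (simp add: V_def)
  next
    case True
    obtain s t where st: "s \<in> {0..1}" "t \<in> {0..1}" "pi / 2 \<le> \<theta> s - \<theta> t"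
      using angle_oscillation_ge_half_pi[OF \<theta>_cont assms(4-11)] by blast
    have "2 * (\<theta> s - \<theta> t) \<le> V 0 1"
      using three_pieces[of s t] three_pieces[of t s] st k True by (cases "s \<le> t") auto
    with st show ?thesis by (simp add: V_def)
  qed
qed

lemma Im_logderiv_absolutely_integrable:
  fixes z g :: "real \<Rightarrow> complex"
  assumes "continuous_on {0..1} z" "\<And>t. t \<in> {0..1} \<Longrightarrow> z t \<noteq> 0"
    and "g absolutely_integrable_on {0..1}"
  shows "(\<lambda>t. Im (g t / z t)) absolutely_integrable_on {0..1}"
  using absolutely_integrable_linear[OF logderiv_absolutely_integrable[OF assms] bounded_linear_Im]
  by (simp add: o_def)

theorem closed_curve_turning_ge_pi:
  fixes z g :: "real \<Rightarrow> complex"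
  assumes g: "g absolutely_integrable_on {0..1}"
    and z: "\<And>t. t \<in> {0..1} \<Longrightarrow> z t = z 0 + integral {0..t} g"
    and nonzero: "\<And>t. t \<in> {0..1} \<Longrightarrow> z t \<noteq> 0" and closed: "z 1 = z 0"
    and "ta \<in> {0..1}" "Re (z ta) \<le> 0" and "tb \<in> {0..1}" "Re (z tb) > 0"
    and "t3 \<in> {0..1}" "Im (z t3) \<ge> 0" and "t4 \<in> {0..1}" "Im (z t4) \<le> 0"
  shows "pi \<le> integral {0..1} (\<lambda>t. \<bar>Im (g t / z t)\<bar>)"
proof -
  define h where "h = (\<lambda>s. g s / z s)"
  have "g integrable_on {0..1}"
    using g by (simp add: absolutely_integrable_on_def)
  then have z_cont: "continuous_on {0..1} z"
    by (rule continuous_on_integral_eq) (rule z)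
  have h_int: "h integrable_on {0..1}"
    using logderiv_absolutely_integrable[OF z_cont nonzero g]
    by (simp add: h_def absolutely_integrable_on_def)
  define \<theta> where "\<theta> t = Arg (z 0) + Im (integral {0..t} h)" for t
  define r where "r t = norm (z 0) * exp (Re (integral {0..t} h))" for t
  have r_pos: "r t > 0" for t
    using nonzero[of 0] by (simp add: r_def)
  have polar: "z t = of_real (r t) * cis (\<theta> t)" if "t \<in> {0..1}" for t
  proof -
    have "z t = z 0 * exp (integral {0..t} h)"
      unfolding h_def using exp_integral_logderiv[OF g z nonzero that] .
    also have "z 0 = of_real (norm (z 0)) * cis (Arg (z 0))"
      using rcis_cmod_Arg[of "z 0"] by (simp add: rcis_def)
    finally show ?thesis
      by (simp add: r_def \<theta>_def exp_eq_polar[of "integral {0..t} h"] cis_mult[symmetric] mult_ac)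
  qed
  have sign: "Re (z t) = r t * cos (\<theta> t)" "Im (z t) = r t * sin (\<theta> t)" if "t \<in> {0..1}" for t
    using polar[OF that] by simp_all
  show ?thesis
  proof (rule total_turning_ge_pi)
    show "(\<lambda>t. Im (g t / z t)) absolutely_integrable_on {0..1}"
      by (rule Im_logderiv_absolutely_integrable[OF z_cont nonzero g])
    show "\<theta> t = \<theta> 0 + integral {0..t} (\<lambda>t. Im (g t / z t))" if "t \<in> {0..1}" for t
    proof -
      have "h integrable_on {0..t}"
        using that by (intro integrable_on_subinterval[OF h_int]) auto
      then have "((\<lambda>s. Im (h s)) has_integral Im (integral {0..t} h)) {0..t}"
        by (intro has_integral_Im integrable_integral)
      then show ?thesis by (simp add: \<theta>_def h_def integral_unique)
    qed
    have "of_real (r 1) * cis (\<theta> 1) = of_real (r 0) * cis (\<theta> 0)"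
      using polar[of 0] polar[of 1] closed by simp
    moreover from this have "r 1 = r 0"
      using r_pos[of 0] r_pos[of 1] by (metis abs_of_pos norm_cis norm_mult norm_of_real mult.right_neutral)
    ultimately show "cis (\<theta> 1) = cis (\<theta> 0)"
      using r_pos[of 0] by simp
    show "cos (\<theta> ta) \<le> 0" "cos (\<theta> tb) > 0" "sin (\<theta> t3) \<ge> 0" "sin (\<theta> t4) \<le> 0"
      using assms(5-12) sign[of ta] sign[of tb] sign[of t3] sign[of t4]
        r_pos[of ta] r_pos[of tb] r_pos[of t3] r_pos[of t4]
      by (simp_all add: mult_le_0_iff zero_less_mult_iff zero_le_mult_iff)
  qed (use assms(5-12) in auto)
qed

section \<open>The energy of an admissible curve\<close>

lemma continuous_has_integral_attains:
  fixes f :: "real \<Rightarrow> real"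
  assumes f: "continuous_on {0..1} f" and I: "(f has_integral I) {0..1}"
  obtains s t where "s \<in> {0..1}" "f s \<le> I" "t \<in> {0..1}" "I \<le> f t"
proof -
  obtain s where s: "s \<in> {0..1}" "\<And>u. u \<in> {0..1} \<Longrightarrow> f s \<le> f u"
    using continuous_attains_inf[OF compact_Icc _ f] by auto
  obtain t where t: "t \<in> {0..1}" "\<And>u. u \<in> {0..1} \<Longrightarrow> f u \<le> f t"
    using continuous_attains_sup[OF compact_Icc _ f] by auto
  have "f s \<le> I"
    using has_integral_le[OF has_integral_const_real[of "f s" 0 1] I] s by simp
  moreover have "I \<le> f t"
    using has_integral_le[OF I has_integral_const_real[of "f t" 0 1]] t by simp
  ultimately show ?thesis using that s(1) t(1) by blast
qed

lemma sq_div_ge_tangent_line: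
  fixes w s c :: real
  assumes "s > 0"
  shows "2 * c * \<bar>w\<bar> - c\<^sup>2 * s \<le> w\<^sup>2 / s"
proof -
  have "0 \<le> (\<bar>w\<bar> - c * s)\<^sup>2 / s"
    using assms by simp
  also have "(\<bar>w\<bar> - c * s)\<^sup>2 / s = w\<^sup>2 / s - (2 * c * \<bar>w\<bar> - c\<^sup>2 * s)"
    using assms by (simp add: field_simps power2_eq_square)
  finally show ?thesis by simp
qed

lemma curvature_energy_ge:
  fixes \<omega> S \<Theta> :: "real \<Rightarrow> real"
  assumes e: "(\<lambda>t. \<epsilon>\<^sup>2 * (\<omega> t)\<^sup>2 / S t + \<Theta> t * S t) integrable_on {0..1}"
    and \<omega>: "(\<lambda>t. \<bar>\<omega> t\<bar>) integrable_on {0..1}" and S: "S integrable_on {0..1}"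
    and S_pos: "\<And>t. t \<in> {0..1} \<Longrightarrow> 0 < S t" and \<Theta>: "\<And>t. t \<in> {0..1} \<Longrightarrow> \<alpha> \<le> \<Theta> t"
  shows "\<epsilon>\<^sup>2 * (integral {0..1} (\<lambda>t. \<bar>\<omega> t\<bar>))\<^sup>2 / integral {0..1} S + \<alpha> * integral {0..1} S
    \<le> integral {0..1} (\<lambda>t. \<epsilon>\<^sup>2 * (\<omega> t)\<^sup>2 / S t + \<Theta> t * S t)"
proof -
  define V L where "V = integral {0..1} (\<lambda>t. \<bar>\<omega> t\<bar>)" and "L = integral {0..1} S"
  define c where "c = V / L"
  \<comment> \<open>With this slope the tangent-line bound integrates to Cauchy-Schwarz.\<close>
  have "((\<lambda>t. \<epsilon>\<^sup>2 * (2 * c * \<bar>\<omega> t\<bar> - c\<^sup>2 * S t) + \<alpha> * S t) has_integral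
      \<epsilon>\<^sup>2 * (2 * c * V - c\<^sup>2 * L) + \<alpha> * L) {0..1}"
    unfolding V_def L_def using \<omega> S
    by (intro has_integral_add has_integral_diff has_integral_mult_right integrable_integral)
  moreover have "\<epsilon>\<^sup>2 * (2 * c * \<bar>\<omega> t\<bar> - c\<^sup>2 * S t) + \<alpha> * S t \<le> \<epsilon>\<^sup>2 * (\<omega> t)\<^sup>2 / S t + \<Theta> t * S t"
    if "t \<in> {0..1}" for t
  proof -
    have "\<epsilon>\<^sup>2 * (2 * c * \<bar>\<omega> t\<bar> - c\<^sup>2 * S t) \<le> \<epsilon>\<^sup>2 * ((\<omega> t)\<^sup>2 / S t)"
      using sq_div_ge_tangent_line[OF S_pos[OF that]] by (intro mult_left_mono) auto
    moreover have "\<alpha> * S t \<le> \<Theta> t * S t"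
      using \<Theta>[OF that] S_pos[OF that] by (intro mult_right_mono) auto
    ultimately show ?thesis by simp
  qed
  ultimately have "\<epsilon>\<^sup>2 * (2 * c * V - c\<^sup>2 * L) + \<alpha> * L \<le> integral {0..1} (\<lambda>t. \<epsilon>\<^sup>2 * (\<omega> t)\<^sup>2 / S t + \<Theta> t * S t)"
    using has_integral_le[OF _ integrable_integral[OF e]] by blast
  moreover have "2 * c * V - c\<^sup>2 * L = V\<^sup>2 / L" \<comment> \<open>also for \<open>L = 0\<close>, as \<open>x / 0 = 0\<close>\<close>
    by (cases "L = 0") (simp_all add: c_def field_simps power2_eq_square)
  ultimately show ?thesis
    by (simp add: V_def L_def)
qed

lemma inverse_plus_linear_gt_1:
  fixes u L \<alpha> :: real
  assumes "u > 0" "L \<ge> 1" "\<alpha> > 0" "\<alpha> * (u + 1) \<ge> 1"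
  shows "u / L + \<alpha> * L > 1"
proof -
  have "u * (u + 1) + L\<^sup>2 > L * (u + 1)"
  proof (cases "L \<ge> u")
    case True
    have "u * (u + 1) + L\<^sup>2 - L * (u + 1) = (L - 1) * (L - u) + u\<^sup>2"
      by (simp add: algebra_simps power2_eq_square)
    moreover have "(L - 1) * (L - u) \<ge> 0" "u\<^sup>2 > 0" using True assms by simp_all
    ultimately show ?thesis by linarith
  next
    case False
    have "u * (u + 1) + L\<^sup>2 - L * (u + 1) = (u + 1) * (u - L) + L\<^sup>2"
      by (simp add: algebra_simps power2_eq_square)
    moreover have "(u + 1) * (u - L) > 0" "L\<^sup>2 \<ge> 0" using False assms by simp_all
    ultimately show ?thesis by linarith
  qed
  moreover have "L\<^sup>2 \<le> \<alpha> * (u + 1) * L\<^sup>2"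
    using assms by (simp add: mult_le_cancel_right1)
  ultimately have "(u + 1) * L < (u + 1) * (u + \<alpha> * L\<^sup>2)"
    by (simp add: algebra_simps)
  then have "L < u + \<alpha> * L\<^sup>2"
    using assms by (simp add: mult_less_cancel_left_pos)
  then show ?thesis
    using assms by (simp add: field_simps power2_eq_square)
qed

lemma has_integral_Complex:
  assumes "(f has_integral I) S" "(g has_integral J) S"
  shows "((\<lambda>t. Complex (f t) (g t)) has_integral Complex I J) S"
proof -
  have "((\<lambda>t. of_real (f t) + \<i> * of_real (g t)) has_integral of_real I + \<i> * of_real J) S"
    using assms by (intro has_integral_add has_integral_mult_right has_integral_of_real)
  then show ?thesis unfolding Complex_eq .
qed

lemma absolutely_integrable_Complex:
  fixes f g :: "'a::euclidean_space \<Rightarrow> real"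
  assumes "f absolutely_integrable_on S" "g absolutely_integrable_on S"
  shows "(\<lambda>t. Complex (f t) (g t)) absolutely_integrable_on S"
proof (rule absolutely_integrable_componentwise)
  fix b :: complex assume "b \<in> Basis"
  then show "(\<lambda>t. Complex (f t) (g t) \<bullet> b) absolutely_integrable_on S"
    using assms by (auto simp: Basis_complex_def inner_complex_def)
qed

lemma H2_01E:
  assumes "H2_01 f"
  obtains f' g N where
    "\<And>t. t \<in> {0..1} \<Longrightarrow> (f has_real_derivative f' t) (at t within {0..1})"
    "\<And>t. t \<in> {0..1} \<Longrightarrow> d1 f t = f' t"
    "g absolutely_integrable_on {0..1}" "(\<lambda>t. (g t)\<^sup>2) absolutely_integrable_on {0..1}"
    "\<And>t. t \<in> {0..1} \<Longrightarrow> f' t = f' 0 + integral {0..t} g"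
    "negligible N" "\<And>t. t \<in> {0..1} - N \<Longrightarrow> d2 f t = g t"
proof -
  obtain f' g where f': "\<forall>t\<in>{0..1}. (f has_vector_derivative f' t) (at t within {0..1})"
    and g: "set_integrable lborel {0..1} g" "set_integrable lborel {0..1} (\<lambda>t. (g t)\<^sup>2)"
    and f'_eq: "\<forall>t\<in>{0..1}. f' t = f' 0 + (LBINT s=0..t. g s)"
    using assms unfolding H2_01_def by blast
  have vector_derivative_eq: "vector_derivative h (at t within {0..1}) = D"
    if "(h has_real_derivative D) (at t within {0..1})" "t \<in> {0..1}" for h D t
    using that by (intro vector_derivative_within_closed_interval)
      (auto simp: has_real_derivative_iff_has_vector_derivative)
  have lebesgue: "u absolutely_integrable_on {0..1}" if "set_integrable lborel {0..1} u"
    for u :: "real \<Rightarrow> real"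
    using that unfolding set_integrable_def by (simp add: integrable_completion borel_measurable_integrable)
  have f'_deriv: "(f has_real_derivative f' t) (at t within {0..1})" if "t \<in> {0..1}" for t
    using f' that by (simp add: has_real_derivative_iff_has_vector_derivative)
  have d1_eq: "d1 f t = f' t" if "t \<in> {0..1}" for t
    unfolding d1_def using vector_derivative_eq[OF f'_deriv[OF that] that] .
  have f'_integral: "f' t = f' 0 + integral {0..t} g" if "t \<in> {0..1}" for t
  proof -
    have "set_integrable lborel {0..t} g"
      by (rule set_integrable_subset[OF g(1)]) (use that in auto)
    then have "(LBINT s=0..t. g s) = integral {0..t} g"
      using interval_integral_eq_integral[of 0 t g] that by (simp add: zero_ereal_def)
    moreover have "f' t = f' 0 + (LBINT s=0..t. g s)"
      using f'_eq that by blast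
    ultimately show ?thesis by simp
  qed
  obtain N where "negligible N"
    and N: "\<And>t. t \<in> {0..1} - N \<Longrightarrow> ((\<lambda>s. integral {0..s} g) has_real_derivative g t) (at t within {0..1})"
    using lebesgue_differentiation[OF lebesgue[OF g(1)]] by blast
  have "d2 f t = g t" if t: "t \<in> {0..1} - N" for t
  proof -
    have "((\<lambda>s. f' 0 + integral {0..s} g) has_real_derivative g t) (at t within {0..1})"
      using N[OF t] by (auto intro: derivative_eq_intros)
    then have "(d1 f has_real_derivative g t) (at t within {0..1})"
      by (rule has_field_derivative_transform_within[where d=1]) (use t in \<open>auto simp: d1_eq f'_integral[symmetric]\<close>)
    then show ?thesis
      unfolding d2_def d1_def[of "d1 f"] using vector_derivative_eq t by blast
  qed
  with that[OF f'_deriv d1_eq lebesgue[OF g(1)] lebesgue[OF g(2)] f'_integral \<open>negligible N\<close>] show ?thesis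
    by blast
qed

lemma admissible_tangentE:
  assumes "admissible psi x y"
  obtains z g N where
    "continuous_on {0..1} x" "continuous_on {0..1} y"
    "\<And>t. t \<in> {0..1} \<Longrightarrow> z t = Complex (d1 x t) (d1 y t)" "\<And>t. t \<in> {0..1} \<Longrightarrow> z t \<noteq> 0"
    "continuous_on {0..1} z" "z 1 = z 0" "((\<lambda>t. Re (z t)) has_integral 1) {0..1}" "((\<lambda>t. Im (z t)) has_integral 0) {0..1}"
    "g absolutely_integrable_on {0..1}" "(\<lambda>t. (norm (g t))\<^sup>2) absolutely_integrable_on {0..1}"
    "\<And>t. t \<in> {0..1} \<Longrightarrow> z t = z 0 + integral {0..t} g"
    "negligible N" "\<And>t. t \<in> {0..1} - N \<Longrightarrow> g t = Complex (d2 x t) (d2 y t)"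
proof -
  have H2: "H2_01 x" "H2_01 y" and speed: "\<And>t. t \<in> {0..1} \<Longrightarrow> speed x y t > 0"
    and ends: "x 0 = 0" "x 1 = 1" "y 0 = y 1" "d1 x 0 = d1 x 1" "d1 y 0 = d1 y 1"
    using assms unfolding admissible_def by auto
  obtain X gx Nx where X: "\<And>t. t \<in> {0..1} \<Longrightarrow> (x has_real_derivative X t) (at t within {0..1})"
    "\<And>t. t \<in> {0..1} \<Longrightarrow> d1 x t = X t"
    and gx: "gx absolutely_integrable_on {0..1}" "(\<lambda>t. (gx t)\<^sup>2) absolutely_integrable_on {0..1}"
    and X_eq: "\<And>t. t \<in> {0..1} \<Longrightarrow> X t = X 0 + integral {0..t} gx"
    and Nx: "negligible Nx" "\<And>t. t \<in> {0..1} - Nx \<Longrightarrow> d2 x t = gx t"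
    by (rule H2_01E[OF H2(1)], blast)
  obtain Y gy Ny where Y: "\<And>t. t \<in> {0..1} \<Longrightarrow> (y has_real_derivative Y t) (at t within {0..1})"
    "\<And>t. t \<in> {0..1} \<Longrightarrow> d1 y t = Y t"
    and gy: "gy absolutely_integrable_on {0..1}" "(\<lambda>t. (gy t)\<^sup>2) absolutely_integrable_on {0..1}"
    and Y_eq: "\<And>t. t \<in> {0..1} \<Longrightarrow> Y t = Y 0 + integral {0..t} gy"
    and Ny: "negligible Ny" "\<And>t. t \<in> {0..1} - Ny \<Longrightarrow> d2 y t = gy t"
    by (rule H2_01E[OF H2(2)], blast)
  define z where "z t = Complex (X t) (Y t)" for t
  define g where "g t = Complex (gx t) (gy t)" for t
  show thesis
  proof
    show "continuous_on {0..1} x"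
      using X(1) by (auto intro!: continuous_on_vector_derivative[of _ _ X]
          simp: has_real_derivative_iff_has_vector_derivative)
    show "continuous_on {0..1} y"
      using Y(1) by (auto intro!: continuous_on_vector_derivative[of _ _ Y]
          simp: has_real_derivative_iff_has_vector_derivative)
    show z_eq: "z t = Complex (d1 x t) (d1 y t)" if "t \<in> {0..1}" for t
      using that by (simp add: z_def X(2) Y(2))
    show "z t \<noteq> 0" if "t \<in> {0..1}" for t
      using speed[OF that] by (auto simp: z_eq[OF that] speed_def complex_eq_iff)
    show "z 1 = z 0"
      using ends z_eq[of 0] z_eq[of 1] by simp
    have "(X has_integral x 1 - x 0) {0..1}" "(Y has_integral y 1 - y 0) {0..1}"
      using X(1) Y(1) by (auto intro!: fundamental_theorem_of_calculus
          simp: has_real_derivative_iff_has_vector_derivative)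
    then show "((\<lambda>t. Re (z t)) has_integral 1) {0..1}" "((\<lambda>t. Im (z t)) has_integral 0) {0..1}"
      using ends by (simp_all add: z_def)
    show "g absolutely_integrable_on {0..1}"
      unfolding g_def by (rule absolutely_integrable_Complex[OF gx(1) gy(1)])
    show "(\<lambda>t. (norm (g t))\<^sup>2) absolutely_integrable_on {0..1}"
      using set_integral_add(1)[OF gx(2) gy(2)] by (simp add: g_def cmod_power2)
    show z_integral: "z t = z 0 + integral {0..t} g" if "t \<in> {0..1}" for t
    proof -
      have "gx integrable_on {0..t}" "gy integrable_on {0..t}"
        using gx(1) gy(1) that
        by (auto intro: integrable_on_subinterval simp: absolutely_integrable_on_def)
      then have "(g has_integral Complex (integral {0..t} gx) (integral {0..t} gy)) {0..t}"
        unfolding g_def by (intro has_integral_Complex integrable_integral)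
      then show ?thesis
        using X_eq[OF that] Y_eq[OF that] by (simp add: z_def integral_unique complex_eq_iff)
    qed
    have "g integrable_on {0..1}"
      using \<open>g absolutely_integrable_on {0..1}\<close> by (simp add: absolutely_integrable_on_def)
    then show "continuous_on {0..1} z"
      by (rule continuous_on_integral_eq) (rule z_integral)
    show "negligible (Nx \<union> Ny)"
      using Nx(1) Ny(1) by simp
    show "g t = Complex (d2 x t) (d2 y t)" if "t \<in> {0..1} - (Nx \<union> Ny)" for t
      using that Nx(2) Ny(2) by (simp add: g_def)
  qed
qed

lemma curvature_integrand_absolutely_integrable:
  fixes z g :: "real \<Rightarrow> complex" and \<Theta> :: "real \<Rightarrow> real"
  assumes z: "continuous_on {0..1} z" "\<And>t. t \<in> {0..1} \<Longrightarrow> z t \<noteq> 0"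
    and g: "g absolutely_integrable_on {0..1}" "(\<lambda>t. (norm (g t))\<^sup>2) absolutely_integrable_on {0..1}"
    and \<Theta>: "\<Theta> \<in> borel_measurable (lebesgue_on {0..1})" "\<And>t. \<bar>\<Theta> t\<bar> \<le> K"
  shows "(\<lambda>t. \<epsilon>\<^sup>2 * (Im (g t / z t))\<^sup>2 / norm (z t) + \<Theta> t * norm (z t)) absolutely_integrable_on {0..1}"
proof -
  have [measurable]: "z \<in> borel_measurable (lebesgue_on {0..1})"
    "(\<lambda>t. norm (z t)) \<in> borel_measurable (lebesgue_on {0..1})" "g \<in> borel_measurable (lebesgue_on {0..1})"
    "\<Theta> \<in> borel_measurable (lebesgue_on {0..1})"
    using z(1) continuous_on_norm[OF z(1)] g(1) \<Theta>(1)
    by (auto intro: continuous_imp_measurable_on_sets_lebesgue simp del: norm_conv_dist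
        simp add: absolutely_integrable_measurable)
  obtain tm where tm: "tm \<in> {0..1}" "\<And>t. t \<in> {0..1} \<Longrightarrow> norm (z tm) \<le> norm (z t)"
    using continuous_attains_inf[OF compact_Icc _ continuous_on_norm[OF z(1)]] by auto
  define m where "m = norm (z tm)"
  have "m > 0" using z(2)[OF tm(1)] by (simp add: m_def)
  obtain B where B: "\<And>t. t \<in> {0..1} \<Longrightarrow> norm (z t) \<le> B"
    using continuous_on_compact_bound[OF compact_Icc z(1)] by blast
  have bound: "norm (\<epsilon>\<^sup>2 * (Im (g t / z t))\<^sup>2 / norm (z t) + \<Theta> t * norm (z t))
      \<le> \<epsilon>\<^sup>2 / m ^ 3 * (norm (g t))\<^sup>2 + K * B" if t: "t \<in> {0..1}" for t
  proof -
    define k where "k = (Im (g t / z t))\<^sup>2 / norm (z t)"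
    have "m \<le> norm (z t)" using tm(2)[OF t] by (simp add: m_def)
    have "(Im (g t / z t))\<^sup>2 \<le> (norm (g t / z t))\<^sup>2"
      using abs_Im_le_cmod[of "g t / z t"] abs_le_square_iff[of "Im (g t / z t)" "norm (g t / z t)"] by simp
    then have "k \<le> (norm (g t / z t))\<^sup>2 / norm (z t)"
      unfolding k_def by (rule divide_right_mono) simp
    also have "\<dots> = (norm (g t))\<^sup>2 / norm (z t) ^ 3"
      by (simp add: norm_divide power_divide eval_nat_numeral)
    also have "\<dots> \<le> (norm (g t))\<^sup>2 / m ^ 3"
      using \<open>m > 0\<close> \<open>m \<le> norm (z t)\<close> by (intro divide_left_mono power_mono mult_pos_pos) auto
    finally have "\<epsilon>\<^sup>2 * k \<le> \<epsilon>\<^sup>2 * ((norm (g t))\<^sup>2 / m ^ 3)"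
      by (rule mult_left_mono) simp
    moreover have "0 \<le> \<epsilon>\<^sup>2 * k" by (simp add: k_def)
    moreover have "\<bar>\<Theta> t * norm (z t)\<bar> \<le> K * B"
      unfolding abs_mult using B[OF t] \<Theta>(2)[of t] by (intro mult_mono) auto
    moreover have "\<epsilon>\<^sup>2 * (Im (g t / z t))\<^sup>2 / norm (z t) = \<epsilon>\<^sup>2 * k"
      by (simp add: k_def)
    ultimately show ?thesis
      unfolding real_norm_def by simp
  qed
  have "(\<lambda>t. (norm (g t))\<^sup>2) integrable_on {0..1}"
    using g(2) by (simp add: absolutely_integrable_on_def)
  then have "(\<lambda>t. \<epsilon>\<^sup>2 / m ^ 3 * (norm (g t))\<^sup>2 + K * B) integrable_on {0..1}"
    by (intro integrable_add integrable_on_mult_right[of "\<lambda>t. (norm (g t))\<^sup>2"] integrable_const_ivl)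
  moreover have "(\<lambda>t. \<epsilon>\<^sup>2 * (Im (g t / z t))\<^sup>2 / norm (z t) + \<Theta> t * norm (z t))
      \<in> borel_measurable (lebesgue_on {0..1})"
    by measurable
  ultimately show ?thesis
    by (intro measurable_bounded_by_integrable_imp_absolutely_integrable[OF _ _ _ bound]) auto
qed

lemma curvature_term_eq:
  fixes z g :: complex
  assumes "z \<noteq> 0"
  shows "\<epsilon>\<^sup>2 * (Re z * Im g - Re g * Im z)\<^sup>2 / (sqrt ((Re z)\<^sup>2 + (Im z)\<^sup>2)) ^ 5
    = \<epsilon>\<^sup>2 * (Im (g / z))\<^sup>2 / norm z"
proof -
  have "norm z > 0" using assms by simp
  have "Im (g / z) * (norm z)\<^sup>2 = (Im g * Re z - Re g * Im z) / (norm z)\<^sup>2 * (norm z)\<^sup>2"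
    by (simp only: Im_divide')
  then have "Re z * Im g - Re g * Im z = Im (g / z) * (norm z)\<^sup>2"
    using \<open>norm z > 0\<close> by (simp add: mult.commute)
  moreover have "\<epsilon>\<^sup>2 * (a * n\<^sup>2)\<^sup>2 / n ^ 5 = \<epsilon>\<^sup>2 * a\<^sup>2 / n" if "n > 0" for a n :: real
    using that by (simp add: power_mult_distrib field_simps eval_nat_numeral)
  ultimately show ?thesis
    using \<open>norm z > 0\<close> by (simp add: norm_complex_def[symmetric])
qed

lemma energy_eq_integral:
  fixes z g :: "real \<Rightarrow> complex" and \<epsilon> \<alpha> :: real
  assumes psi: "continuous_on UNIV psi"
    and x: "continuous_on {0..1} x" and y: "continuous_on {0..1} y"
    and z: "continuous_on {0..1} z" "\<And>t. t \<in> {0..1} \<Longrightarrow> z t = Complex (d1 x t) (d1 y t)"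
      "\<And>t. t \<in> {0..1} \<Longrightarrow> z t \<noteq> 0"
    and g: "g absolutely_integrable_on {0..1}" "(\<lambda>t. (norm (g t))\<^sup>2) absolutely_integrable_on {0..1}"
    and N: "negligible N" "\<And>t. t \<in> {0..1} - N \<Longrightarrow> g t = Complex (d2 x t) (d2 y t)"
  defines "e \<equiv> \<lambda>t. \<epsilon>\<^sup>2 * (Im (g t / z t))\<^sup>2 / norm (z t) + Theta psi \<alpha> (x t, y t) * norm (z t)"
  shows "e absolutely_integrable_on {0..1}" and "energy \<epsilon> \<alpha> psi x y = integral {0..1} e"
proof -
  have [measurable]: "x \<in> borel_measurable (lebesgue_on {0..1})" "y \<in> borel_measurable (lebesgue_on {0..1})"
    "(\<lambda>t. psi (x t)) \<in> borel_measurable (lebesgue_on {0..1})"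
    using x y continuous_on_compose2[OF psi x]
    by (auto intro: continuous_imp_measurable_on_sets_lebesgue)
  have Theta_measurable: "(\<lambda>t. Theta psi \<alpha> (x t, y t)) \<in> borel_measurable (lebesgue_on {0..1})"
    unfolding Theta_def prod.sel by measurable
  have Theta_bound: "\<bar>Theta psi \<alpha> (x t, y t)\<bar> \<le> 1 + \<bar>\<alpha>\<bar>" for t
    by (simp add: Theta_def)
  show e_integrable: "e absolutely_integrable_on {0..1}"
    using curvature_integrand_absolutely_integrable[OF z(1,3) g Theta_measurable Theta_bound]
    unfolding e_def .
  define E where "E t = \<epsilon>\<^sup>2 * (d1 x t * d2 y t - d2 x t * d1 y t)\<^sup>2 / speed x y t ^ 5
      + Theta psi \<alpha> (x t, y t) * speed x y t" for t
  have E_eq: "E t = e t" if t: "t \<in> {0..1} - N" for t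
    using t z(3)[of t] curvature_term_eq[where z="z t" and g="g t" and \<epsilon>=\<epsilon>]
    by (simp add: E_def e_def speed_def z(2) N(2) norm_complex_def)
  have "E absolutely_integrable_on {0..1}"
    by (rule absolutely_integrable_spike[OF e_integrable N(1)]) (use E_eq in auto)
  then have "energy \<epsilon> \<alpha> psi x y = integral {0..1} E"
    unfolding energy_def E_def[symmetric] by (rule set_lebesgue_integral_eq_integral(2))
  also have "\<dots> = integral {0..1} e"
    by (rule integral_spike[OF N(1)]) (use E_eq in auto)
  finally show "energy \<epsilon> \<alpha> psi x y = integral {0..1} e" .
qed

theorem energy_gt_1_if_not_graph_curve:
  fixes \<epsilon> \<alpha> :: real
  assumes psi: "continuous_on UNIV psi" and "\<epsilon> > 0" "\<alpha> > 0" "\<alpha> \<le> 1"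
    and balance: "(pi\<^sup>2 * \<epsilon>\<^sup>2 + 1) * \<alpha> \<ge> 1"
    and adm: "admissible psi x y" and not_graph: "\<not> graph_curve x y"
  shows "1 < energy \<epsilon> \<alpha> psi x y"
proof -
  obtain z g N where x: "continuous_on {0..1} x" and y: "continuous_on {0..1} y"
    and z: "\<And>t. t \<in> {0..1} \<Longrightarrow> z t = Complex (d1 x t) (d1 y t)" "\<And>t. t \<in> {0..1} \<Longrightarrow> z t \<noteq> 0"
      "continuous_on {0..1} z" "z 1 = z 0"
    and Re_z: "((\<lambda>t. Re (z t)) has_integral 1) {0..1}" and Im_z: "((\<lambda>t. Im (z t)) has_integral 0) {0..1}"
    and g: "g absolutely_integrable_on {0..1}" "(\<lambda>t. (norm (g t))\<^sup>2) absolutely_integrable_on {0..1}"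
    and z_g: "\<And>t. t \<in> {0..1} \<Longrightarrow> z t = z 0 + integral {0..t} g"
    and N: "negligible N" "\<And>t. t \<in> {0..1} - N \<Longrightarrow> g t = Complex (d2 x t) (d2 y t)"
    by (rule admissible_tangentE[OF adm], blast)
  define V where "V = integral {0..1} (\<lambda>t. \<bar>Im (g t / z t)\<bar>)"
  define L where "L = integral {0..1} (\<lambda>t. norm (z t))"
  have "pi \<le> V"
  proof -
    obtain ta where ta: "ta \<in> {0..1}" "Re (z ta) \<le> 0"
      using not_graph z(1) unfolding graph_curve_def by force
    obtain tb where tb: "tb \<in> {0..1}" "1 \<le> Re (z tb)"
      using continuous_has_integral_attains[OF continuous_on_Re[OF z(3)] Re_z] by blast
    obtain t3 t4 where t34: "t3 \<in> {0..1}" "0 \<le> Im (z t3)" "t4 \<in> {0..1}" "Im (z t4) \<le> 0"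
      using continuous_has_integral_attains[OF continuous_on_Im[OF z(3)] Im_z] by blast
    have "0 < Re (z tb)" using tb(2) by linarith
    from closed_curve_turning_ge_pi[OF g(1) z_g z(2) z(4) ta tb(1) this t34] show ?thesis
      unfolding V_def .
  qed
  have norm_z: "(\<lambda>t. norm (z t)) integrable_on {0..1}"
    by (intro integrable_continuous_interval continuous_on_norm z(3))
  have "1 \<le> L"
    unfolding L_def using has_integral_le[OF Re_z integrable_integral[OF norm_z]] complex_Re_le_cmod by blast
  have energy: "energy \<epsilon> \<alpha> psi x y = integral {0..1} (\<lambda>t. \<epsilon>\<^sup>2 * (Im (g t / z t))\<^sup>2 / norm (z t) + Theta psi \<alpha> (x t, y t) * norm (z t))"
    and "(\<lambda>t. \<epsilon>\<^sup>2 * (Im (g t / z t))\<^sup>2 / norm (z t) + Theta psi \<alpha> (x t, y t) * norm (z t)) absolutely_integrable_on {0..1}"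
    using energy_eq_integral[OF psi x y z(3,1,2) g N] by simp_all
  then have "\<epsilon>\<^sup>2 * V\<^sup>2 / L + \<alpha> * L \<le> energy \<epsilon> \<alpha> psi x y"
    unfolding V_def L_def energy
  proof (intro curvature_energy_ge norm_z)
    show "(\<lambda>t. \<bar>Im (g t / z t)\<bar>) integrable_on {0..1}"
      using Im_logderiv_absolutely_integrable[OF z(3,2) g(1)] by (simp add: absolutely_integrable_on_def)
  qed (use z(2) \<open>\<alpha> \<le> 1\<close> in \<open>auto simp: absolutely_integrable_on_def Theta_def\<close>)
  moreover have "\<epsilon>\<^sup>2 * pi\<^sup>2 / L \<le> \<epsilon>\<^sup>2 * V\<^sup>2 / L"
    using \<open>pi \<le> V\<close> \<open>1 \<le> L\<close> by (intro divide_right_mono mult_left_mono power_mono) auto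
  moreover have "1 < \<epsilon>\<^sup>2 * pi\<^sup>2 / L + \<alpha> * L"
    using inverse_plus_linear_gt_1[of "\<epsilon>\<^sup>2 * pi\<^sup>2" L \<alpha>] \<open>\<epsilon> > 0\<close> \<open>\<alpha> > 0\<close> \<open>1 \<le> L\<close> balance
    by (simp add: algebra_simps)
  ultimately show ?thesis by linarith
qed

lemma affine_d1_d2:
  assumes "t \<in> {0..1}"
  shows "d1 (\<lambda>s. a * s + b) t = a" and "d2 (\<lambda>s. a * s + b) t = 0"
proof -
  have d1: "d1 (\<lambda>s. a * s + b) u = a" if "u \<in> {0..1}" for u
    unfolding d1_def using that
    by (intro vector_derivative_within_closed_interval) (auto intro!: derivative_eq_intros)
  then show "d1 (\<lambda>s. a * s + b) t = a" using assms .
  have "(d1 (\<lambda>s. a * s + b) has_vector_derivative 0) (at t within {0..1})"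
    by (rule has_vector_derivative_transform_within[OF has_vector_derivative_const[of a] zero_less_one assms])
      (use d1 in auto)
  then show "d2 (\<lambda>s. a * s + b) t = 0"
    unfolding d2_def d1_def[of "d1 _"] using assms by (intro vector_derivative_within_closed_interval) auto
qed

lemma H2_01_affine: "H2_01 (\<lambda>s. a * s + b)"
  unfolding H2_01_def
proof (rule exI[of _ "\<lambda>_. a"], rule exI[of _ "\<lambda>_. 0"], intro conjI ballI)
  show "((\<lambda>s. a * s + b) has_vector_derivative a) (at t within {0..1})" for t
    by (auto intro!: derivative_eq_intros)
qed (auto simp: set_integrable_def)

lemma horizontal_segment_energy:
  assumes psi: "continuous_on UNIV psi"
  obtains x y where "admissible psi x y" "energy \<epsilon> \<alpha> psi x y = 1"
proof -
  obtain B where B: "\<And>t. t \<in> {0..1} \<Longrightarrow> norm (psi t) \<le> B"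
    using continuous_on_compact_bound[OF compact_Icc continuous_on_subset[OF psi]] by blast
  define x y where "x = (\<lambda>s::real. 1 * s + 0)" and "y = (\<lambda>s::real. 0 * s + (B + 1))"
  have d: "d1 x t = 1" "d1 y t = 0" "d2 x t = 0" "d2 y t = 0" if "t \<in> {0..1}" for t
    unfolding x_def y_def using affine_d1_d2[OF that] by blast+
  have above: "psi (x t) < y t" if "t \<in> {0..1}" for t
    using B[OF that] by (simp add: x_def y_def)
  have "H2_01 x" "H2_01 y"
    unfolding x_def y_def by (rule H2_01_affine)+
  moreover have "x 0 = 0" "x 1 = 1" "y 0 = y 1"
    by (simp_all add: x_def y_def)
  ultimately have "admissible psi x y"
    unfolding admissible_def using d above by (auto simp: speed_def less_imp_le)
  moreover have "energy \<epsilon> \<alpha> psi x y = 1"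
  proof -
    have "energy \<epsilon> \<alpha> psi x y = (LINT t:{0..1::real}|lebesgue. (1 :: real))"
      unfolding energy_def
    proof (rule set_lebesgue_integral_cong)
      show "\<forall>t. t \<in> {0..1} \<longrightarrow> \<epsilon>\<^sup>2 * (d1 x t * d2 y t - d2 x t * d1 y t)\<^sup>2 / speed x y t ^ 5
          + Theta psi \<alpha> (x t, y t) * speed x y t = 1"
        using d above by (auto simp: speed_def Theta_def less_imp_neq[symmetric])
    qed simp
    also have "\<dots> = integral {0..1::real} (\<lambda>t. 1 :: real)"
      by (rule set_lebesgue_integral_eq_integral(2)) (rule absolutely_integrable_on_const, simp)
    finally show ?thesis by simp
  qed
  ultimately show ?thesis using that by blast
qed

lemma energy_nonneg:
  assumes "\<alpha> > 0"
  shows "0 \<le> energy \<epsilon> \<alpha> psi x y"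
  unfolding energy_def set_lebesgue_integral_def
  using assms by (intro Bochner_Integration.integral_nonneg) (auto simp: Theta_def speed_def)

theorem theorem2:
  fixes psi :: "real \<Rightarrow> real" and \<epsilon> \<alpha> :: real
  assumes "continuous_on UNIV psi"
    and "\<And>s. psi (s + 1) = psi s"
    and "\<epsilon> > 0" and "0 < \<alpha>" and "\<alpha> < 1"
    and "(pi\<^sup>2 * \<epsilon>\<^sup>2 + 1) * \<alpha> \<ge> 1"
  shows "\<forall>x y. minimizer \<epsilon> \<alpha> psi x y \<longrightarrow> graph_curve x y"
proof (intro allI impI)
  fix x y assume "minimizer \<epsilon> \<alpha> psi x y"
  then have adm: "admissible psi x y"
    and min: "energy \<epsilon> \<alpha> psi x y = (INF c \<in> {(u, v). admissible psi u v}. energy \<epsilon> \<alpha> psi (fst c) (snd c))"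
    unfolding minimizer_def by auto
  obtain x0 y0 where "admissible psi x0 y0" "energy \<epsilon> \<alpha> psi x0 y0 = 1"
    using horizontal_segment_energy[OF assms(1)] .
  moreover have "bdd_below ((\<lambda>c. energy \<epsilon> \<alpha> psi (fst c) (snd c)) ` {(u, v). admissible psi u v})"
    using energy_nonneg[OF assms(4)] by (intro bdd_belowI[where m=0]) auto
  ultimately have "energy \<epsilon> \<alpha> psi x y \<le> 1"
    unfolding min by (metis (no_types, lifting) cINF_lower case_prodI fst_conv mem_Collect_eq snd_conv)
  then show "graph_curve x y"
    using energy_gt_1_if_not_graph_curve[OF assms(1,3,4) less_imp_le[OF assms(5)] assms(6) adm] by linarith
qed

end
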